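(* An object $(V,f,h)$ of $\mathcal R(P,I)$ is simple if and only if $f:P\to V$ is surjective and $h:V\to I$ is injective.
   Context: Let $\tilde Q$ be a finite acyclic quiver, $P$ a fixed projective representation and $I$ a fixed injective representation of $\tilde Q$ over $\mathbb C$ (finite-dimensional). The category $\mathcal R(P,I)$ has as objects triples $(V,f,h)$ with $V$ a finite-dimensional representation of $\tilde Q$, $f:P\to V$ and $h:V\to I$ morphisms of representations; a morphism $(V,f,h)\to(V',f',h')$ is a morphism of representations $g:V\to V'$ with $g\circ f=f'$ and $h'\circ g=h$. An object $(V,f,h)$ is called simple if there is no monomorphism $(V',f',h')\to(V,f,h)$ in $\mathcal R(P,I)$ that is not an isomorphism and no epimorphism $(V,f,h)\to(V'',f'',h'')$ in $\mathcal R(P,I)$ that is not an isomorphism. *)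

theory Defs
  imports "Jordan_Normal_Form.Matrix"
begin

text \<open>A finite-dimensional complex representation is given (up to
isomorphism, which is harmless) by a dimension vector d and, for every arrow
al : i -> j, a matrix of size d j x d i.\<close>

type_synonym ('v,'a) qrep = "('v \<Rightarrow> nat) \<times> ('a \<Rightarrow> complex mat)"

definition acyclic_quiver :: "('a::finite \<Rightarrow> 'v::finite) \<Rightarrow> ('a \<Rightarrow> 'v) \<Rightarrow> bool" where
  "acyclic_quiver s t \<longleftrightarrow> (\<forall>i. (i,i) \<notin> (range (\<lambda>al. (s al, t al)))\<^sup>+)"

definition dimv :: "('v,'a) qrep \<Rightarrow> 'v \<Rightarrow> nat" where "dimv V = fst V"
definition amap :: "('v,'a) qrep \<Rightarrow> 'a \<Rightarrow> complex mat" where "amap V = snd V"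

definition is_rep :: "('a \<Rightarrow> 'v) \<Rightarrow> ('a \<Rightarrow> 'v) \<Rightarrow> ('v,'a) qrep \<Rightarrow> bool" where
  "is_rep s t V \<longleftrightarrow> (\<forall>al. amap V al \<in> carrier_mat (dimv V (t al)) (dimv V (s al)))"

definition rep_hom :: "('a \<Rightarrow> 'v) \<Rightarrow> ('a \<Rightarrow> 'v) \<Rightarrow> ('v,'a) qrep \<Rightarrow> ('v,'a) qrep
    \<Rightarrow> ('v \<Rightarrow> complex mat) \<Rightarrow> bool" where
  "rep_hom s t V W g \<longleftrightarrow>
     (\<forall>i. g i \<in> carrier_mat (dimv W i) (dimv V i)) \<and>
     (\<forall>al. g (t al) * amap V al = amap W al * g (s al))"

definition comp_hom :: "('v \<Rightarrow> complex mat) \<Rightarrow> ('v \<Rightarrow> complex mat) \<Rightarrow> ('v \<Rightarrow> complex mat)" where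
  "comp_hom g f = (\<lambda>i. g i * f i)"

definition hom_surj :: "('v,'a) qrep \<Rightarrow> ('v,'a) qrep \<Rightarrow> ('v \<Rightarrow> complex mat) \<Rightarrow> bool" where
  "hom_surj V W g \<longleftrightarrow> (\<forall>i. \<forall>y \<in> carrier_vec (dimv W i). \<exists>x \<in> carrier_vec (dimv V i). g i *\<^sub>v x = y)"

definition hom_inj :: "('v,'a) qrep \<Rightarrow> ('v,'a) qrep \<Rightarrow> ('v \<Rightarrow> complex mat) \<Rightarrow> bool" where
  "hom_inj V W g \<longleftrightarrow> (\<forall>i. \<forall>x \<in> carrier_vec (dimv V i). \<forall>y \<in> carrier_vec (dimv V i).
       g i *\<^sub>v x = g i *\<^sub>v y \<longrightarrow> x = y)"

text \<open>Projective / injective objects of the category of finite-dimensional representations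
(epimorphisms resp. monomorphisms there are exactly the pointwise surjective resp.
injective morphisms).\<close>
definition projective_rep :: "('a \<Rightarrow> 'v) \<Rightarrow> ('a \<Rightarrow> 'v) \<Rightarrow> ('v,'a) qrep \<Rightarrow> bool" where
  "projective_rep s t P \<longleftrightarrow> is_rep s t P \<and>
     (\<forall>V W p u. is_rep s t V \<and> is_rep s t W \<and> rep_hom s t V W p \<and> hom_surj V W p \<and>
        rep_hom s t P W u \<longrightarrow> (\<exists>v. rep_hom s t P V v \<and> comp_hom p v = u))"

definition injective_rep :: "('a \<Rightarrow> 'v) \<Rightarrow> ('a \<Rightarrow> 'v) \<Rightarrow> ('v,'a) qrep \<Rightarrow> bool" where
  "injective_rep s t I \<longleftrightarrow> is_rep s t I \<and>
     (\<forall>V W j u. is_rep s t V \<and> is_rep s t W \<and> rep_hom s t V W j \<and> hom_inj V W j \<and>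
        rep_hom s t V I u \<longrightarrow> (\<exists>v. rep_hom s t W I v \<and> comp_hom v j = u))"

type_synonym ('v,'a) robj = "('v,'a) qrep \<times> ('v \<Rightarrow> complex mat) \<times> ('v \<Rightarrow> complex mat)"

definition R_obj :: "('a \<Rightarrow> 'v) \<Rightarrow> ('a \<Rightarrow> 'v) \<Rightarrow> ('v,'a) qrep \<Rightarrow> ('v,'a) qrep \<Rightarrow> ('v,'a) robj \<Rightarrow> bool" where
  "R_obj s t P I X \<longleftrightarrow> (case X of (V,f,h) \<Rightarrow>
      is_rep s t V \<and> rep_hom s t P V f \<and> rep_hom s t V I h)"

definition R_hom :: "('a \<Rightarrow> 'v) \<Rightarrow> ('a \<Rightarrow> 'v) \<Rightarrow> ('v,'a) qrep \<Rightarrow> ('v,'a) qrep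
     \<Rightarrow> ('v,'a) robj \<Rightarrow> ('v,'a) robj \<Rightarrow> ('v \<Rightarrow> complex mat) \<Rightarrow> bool" where
  "R_hom s t P I X Y g \<longleftrightarrow> R_obj s t P I X \<and> R_obj s t P I Y \<and>
     (case X of (V,f,h) \<Rightarrow> case Y of (V',f',h') \<Rightarrow>
        rep_hom s t V V' g \<and> comp_hom g f = f' \<and> comp_hom h' g = h)"

definition R_id :: "('v,'a) robj \<Rightarrow> ('v \<Rightarrow> complex mat)" where
  "R_id X = (\<lambda>i. 1\<^sub>m (dimv (fst X) i))"

definition R_iso :: "('a \<Rightarrow> 'v) \<Rightarrow> ('a \<Rightarrow> 'v) \<Rightarrow> ('v,'a) qrep \<Rightarrow> ('v,'a) qrep
     \<Rightarrow> ('v,'a) robj \<Rightarrow> ('v,'a) robj \<Rightarrow> ('v \<Rightarrow> complex mat) \<Rightarrow> bool" where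
  "R_iso s t P I X Y g \<longleftrightarrow> R_hom s t P I X Y g \<and>
     (\<exists>g'. R_hom s t P I Y X g' \<and> comp_hom g' g = R_id X \<and> comp_hom g g' = R_id Y)"

definition R_mono :: "('a \<Rightarrow> 'v) \<Rightarrow> ('a \<Rightarrow> 'v) \<Rightarrow> ('v,'a) qrep \<Rightarrow> ('v,'a) qrep
     \<Rightarrow> ('v,'a) robj \<Rightarrow> ('v,'a) robj \<Rightarrow> ('v \<Rightarrow> complex mat) \<Rightarrow> bool" where
  "R_mono s t P I X Y g \<longleftrightarrow> R_hom s t P I X Y g \<and>
     (\<forall>Z u v. R_hom s t P I Z X u \<and> R_hom s t P I Z X v \<and> comp_hom g u = comp_hom g v \<longrightarrow> u = v)"

definition R_epi :: "('a \<Rightarrow> 'v) \<Rightarrow> ('a \<Rightarrow> 'v) \<Rightarrow> ('v,'a) qrep \<Rightarrow> ('v,'a) qrep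
     \<Rightarrow> ('v,'a) robj \<Rightarrow> ('v,'a) robj \<Rightarrow> ('v \<Rightarrow> complex mat) \<Rightarrow> bool" where
  "R_epi s t P I X Y g \<longleftrightarrow> R_hom s t P I X Y g \<and>
     (\<forall>Z u v. R_hom s t P I Y Z u \<and> R_hom s t P I Y Z v \<and> comp_hom u g = comp_hom v g \<longrightarrow> u = v)"

definition R_simple :: "('a \<Rightarrow> 'v) \<Rightarrow> ('a \<Rightarrow> 'v) \<Rightarrow> ('v,'a) qrep \<Rightarrow> ('v,'a) qrep
     \<Rightarrow> ('v,'a) robj \<Rightarrow> bool" where
  "R_simple s t P I X \<longleftrightarrow>
     \<not> (\<exists>Y g. R_mono s t P I Y X g \<and> \<not> R_iso s t P I Y X g) \<and>
     \<not> (\<exists>Y g. R_epi s t P I X Y g \<and> \<not> R_iso s t P I X Y g)"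

end

theory Submission
  imports Defs "Jordan_Normal_Form.Gauss_Jordan_Elimination"
begin

text \<open>
  Everything is reduced to linear algebra at each vertex, with injectivity and surjectivity of a
  matrix replaced by the existence of a left resp. right inverse. A morphism of R(P,I) which has
  left and right inverses at every vertex is an isomorphism. Conversely, a monomorphism
  g : (W,f',h') \<rightarrow> (V,f,h) is left invertible: the kernel of g is a subrepresentation K of W, and the
  two morphisms [1 \<iota>] and [1 0] from (W,f',h') \<oplus> (K,0,0) to (W,f',h') are equalised by g, so the
  inclusion \<iota> of K vanishes. Dually, via the cokernel, every epimorphism is right invertible.

  Hence if f is surjective, every monomorphism g into (V,f,h) is an isomorphism, as f factors through g;
  dually if h is injective. If f is not surjective, its image is a proper subrepresentation of V
  through which f factors, which yields a monomorphism that is not an isomorphism; if h is not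
  injective, the quotient of V by its kernel yields an epimorphism that is not an isomorphism.
\<close>

section \<open>Rank factorization and kernel complements of matrices\<close>

lemma assoc_mult_mat_dims:
  "dim_col A = dim_row B \<Longrightarrow> dim_col B = dim_row C \<Longrightarrow> A * B * C = A * (B * (C :: 'a::semiring_0 mat))"
  by (rule assoc_mult_mat) auto

lemma minus_zero_mat[simp]: "A \<in> carrier_mat n m \<Longrightarrow> A - 0\<^sub>m n m = (A :: 'a::group_add mat)"
  by (rule eq_matI) auto

lemma zero_mat_mult_vec[simp]: "w \<in> carrier_vec m \<Longrightarrow> 0\<^sub>m n m *\<^sub>v w = (0\<^sub>v n :: 'a::semiring_0 vec)"
  by (rule eq_vecI) (auto simp: scalar_prod_def)

lemma mult_zero_vec[simp]: "A \<in> carrier_mat n m \<Longrightarrow> A *\<^sub>v 0\<^sub>v m = (0\<^sub>v n :: 'a::semiring_0 vec)"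
  by (rule eq_vecI) (auto simp: scalar_prod_def)

lemma pivot_fun_zero_rows_last:
  assumes p: "pivot_fun E f nc" and d: "dim_row E = nr"
    and i: "f i = nc" "i \<le> i'" "i' < nr"
  shows "f i' = nc"
  using i
proof (induction i')
  case (Suc k)
  note pD = pivot_funD[OF d p]
  show ?case
  proof (cases "i = Suc k")
    case False
    then have "f k = nc" using Suc by auto
    moreover have "f (Suc k) \<le> nc" using pD(1) Suc by auto
    moreover have "f (Suc k) > f k \<or> f (Suc k) = nc" using pD(3)[of k] Suc by auto
    ultimately show ?thesis by linarith
  qed (use Suc in simp)
qed simp

lemma pivot_fun_pivot_rows:
  assumes p: "pivot_fun E f nc" and d: "dim_row E = nr"
  obtains r where "r \<le> nr" "\<And>i. i < nr \<Longrightarrow> i < r \<longleftrightarrow> f i < nc"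
proof
  define r where "r = (LEAST i. nr \<le> i \<or> f i = nc)"
  have r: "nr \<le> r \<or> f r = nc" unfolding r_def by (rule LeastI[of _ nr]) simp
  show "r \<le> nr" unfolding r_def by (rule Least_le) simp
  fix i assume i: "i < nr"
  show "i < r \<longleftrightarrow> f i < nc"
  proof
    assume "i < r"
    then have "f i \<noteq> nc" using i not_less_Least unfolding r_def by blast
    then show "f i < nc" using pivot_funD(1)[OF d p i] by simp
  next
    assume "f i < nc"
    then show "i < r" using r pivot_fun_zero_rows_last[OF p d, of r i] i by fastforce
  qed
qed

lemma pivot_columns_right_inverse:
  fixes E :: "'a::semiring_1 mat"
  assumes p: "pivot_fun E f m" and d: "dim_row E = n" and rn: "r \<le> n"
    and rf: "\<And>i. i < n \<Longrightarrow> i < r \<longleftrightarrow> f i < m"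
  shows "mat r m (\<lambda>(i,j). E $$ (i,j)) * mat m r (\<lambda>(j,k). if j = f k then 1 else 0) = 1\<^sub>m r"
    (is "?C * ?R = _")
proof (rule eq_matI)
  note pD = pivot_funD[OF d p]
  fix i k assume ik: "i < dim_row (1\<^sub>m r)" "k < dim_col (1\<^sub>m r)"
  then have i: "i < n" "i < r" and k: "k < n" "k < r" using rn by auto
  have fk: "f k < m" using rf[OF k(1)] k by simp
  have "(?C * ?R) $$ (i,k) = (\<Sum>j<m. E $$ (i,j) * (if j = f k then 1 else 0))"
    using ik by (auto simp: scalar_prod_def lessThan_atLeast0 intro!: sum.cong)
  also have "\<dots> = E $$ (i, f k)"
    using fk by (simp add: if_distrib[of "(*) _"] sum.delta cong: if_cong)
  also have "\<dots> = 1\<^sub>m r $$ (i,k)"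
    using pD(4)[OF k(1) fk] pD(5)[OF k(1) fk i(1)] i k by (cases "i = k") simp_all
  finally show "(?C * ?R) $$ (i,k) = 1\<^sub>m r $$ (i,k)" .
qed auto

lemma mult_mat_drop_zero_rows:
  fixes Q :: "'a::semiring_0 mat"
  assumes Q: "Q \<in> carrier_mat p n" and E: "E \<in> carrier_mat n m" and rn: "r \<le> n"
    and zero: "\<And>i j. r \<le> i \<Longrightarrow> i < n \<Longrightarrow> j < m \<Longrightarrow> E $$ (i,j) = 0"
  shows "mat p r (\<lambda>(i,j). Q $$ (i,j)) * mat r m (\<lambda>(i,j). E $$ (i,j)) = Q * E"
    (is "?B * ?C = _")
proof (rule eq_matI)
  fix i j assume "i < dim_row (Q * E)" "j < dim_col (Q * E)"
  then have i: "i < p" and j: "j < m" using Q E by auto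
  have "(?B * ?C) $$ (i,j) = (\<Sum>k\<in>{0..<r}. Q $$ (i,k) * E $$ (k,j))"
    using i j by (auto simp: scalar_prod_def intro!: sum.cong)
  also have "\<dots> = (\<Sum>k\<in>{0..<n}. Q $$ (i,k) * E $$ (k,j))"
    by (rule sum.mono_neutral_left) (use rn zero j in auto)
  also have "\<dots> = (Q * E) $$ (i,j)" using Q E i j by (auto simp: scalar_prod_def intro!: sum.cong)
  finally show "(?B * ?C) $$ (i,j) = (Q * E) $$ (i,j)" .
qed (use Q E in auto)

lemma rank_factorization:
  fixes A :: "'a::field mat"
  assumes A: "A \<in> carrier_mat n m"
  obtains r B C L R where "B \<in> carrier_mat n r" "C \<in> carrier_mat r m" "L \<in> carrier_mat r n"
    "R \<in> carrier_mat m r" "A = B * C" "L * B = 1\<^sub>m r" "C * R = 1\<^sub>m r"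
proof -
  obtain E where gj: "gauss_jordan_single A = E" by simp
  note G = gauss_jordan_single[OF A gj]
  from G(4) obtain P Q where EPA: "E = P * A" and P: "P \<in> carrier_mat n n" and Q: "Q \<in> carrier_mat n n"
    and PQ: "P * Q = 1\<^sub>m n" and QP: "Q * P = 1\<^sub>m n" by auto
  have E: "E \<in> carrier_mat n m" by (rule G(2))
  then have dE: "dim_row E = n" by simp
  from G(3) obtain f where p: "pivot_fun E f m" unfolding row_echelon_form_def using E by auto
  obtain r where rn: "r \<le> n" and rf: "\<And>i. i < n \<Longrightarrow> i < r \<longleftrightarrow> f i < m"
    using pivot_fun_pivot_rows[OF p dE] by blast
  \<comment> \<open>The echelon form E = P A has exactly r nonzero rows, which form C; R selects their
    pivot columns, and B, L are the matching columns of P\<inverse> = Q and rows of P.\<close>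
  define B where "B = mat n r (\<lambda>(i,j). Q $$ (i,j))"
  define L where "L = mat r n (\<lambda>(i,j). P $$ (i,j))"
  define C where "C = mat r m (\<lambda>(i,j). E $$ (i,j))"
  define R :: "'a mat" where "R = mat m r (\<lambda>(j,k). if j = f k then 1 else 0)"
  have "L * B = 1\<^sub>m r"
  proof (rule eq_matI)
    fix i j assume ij: "i < dim_row (1\<^sub>m r)" "j < dim_col (1\<^sub>m r)"
    then have "(L * B) $$ (i,j) = (P * Q) $$ (i,j)"
      using rn P Q unfolding L_def B_def by (auto simp: scalar_prod_def intro!: sum.cong)
    then show "(L * B) $$ (i,j) = 1\<^sub>m r $$ (i,j)" using PQ ij rn by auto
  qed (auto simp: L_def B_def)
  moreover have "C * R = 1\<^sub>m r"
    unfolding C_def R_def by (rule pivot_columns_right_inverse[OF p dE rn rf])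
  moreover have "B * C = Q * E"
    unfolding B_def C_def
    by (rule mult_mat_drop_zero_rows[OF Q E rn]) (use rf pivot_funD[OF dE p] in fastforce)
  then have "A = B * C" using A EPA QP by (simp add: assoc_mult_mat[OF Q P A, symmetric])
  moreover have "B \<in> carrier_mat n r" "C \<in> carrier_mat r m" "L \<in> carrier_mat r n" "R \<in> carrier_mat m r"
    unfolding B_def L_def C_def R_def by auto
  ultimately show thesis using that by blast
qed

lemma idempotent_mat_split:
  fixes E :: "'a::field mat"
  assumes E: "E \<in> carrier_mat n n" and idem: "E * E = E"
  obtains k K L where "K \<in> carrier_mat n k" "L \<in> carrier_mat k n" "E = K * L" "L * K = 1\<^sub>m k"
proof -
  obtain k K L L' R' where K: "K \<in> carrier_mat n k" and L: "L \<in> carrier_mat k n"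
    and L': "L' \<in> carrier_mat k n" and R': "R' \<in> carrier_mat n k"
    and EKL: "E = K * L" and L'K: "L' * K = 1\<^sub>m k" and LR': "L * R' = 1\<^sub>m k"
    by (rule rank_factorization[OF E])
  have "L * K = (L' * K) * (L * K) * (L * R')" using L'K LR' L K by simp
  also have "\<dots> = L' * ((K * L) * (K * L)) * R'" using K L L' R' by (simp add: assoc_mult_mat_dims)
  also have "\<dots> = (L' * K) * (L * R')" using K L L' R' idem EKL by (simp add: assoc_mult_mat_dims)
  finally show thesis using that K L EKL L'K LR' by simp
qed

lemma mat_kernel_complement:
  fixes G :: "'a::field mat"
  assumes G: "G \<in> carrier_mat m n"
  obtains k K L Y where "K \<in> carrier_mat n k" "L \<in> carrier_mat k n" "Y \<in> carrier_mat n m"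
    "G * K = 0\<^sub>m m k" "L * K = 1\<^sub>m k" "K * L + Y * G = 1\<^sub>m n"
proof -
  obtain r B C L0 R0 where B: "B \<in> carrier_mat m r" and C: "C \<in> carrier_mat r n"
    and L0: "L0 \<in> carrier_mat r m" and R0: "R0 \<in> carrier_mat n r"
    and GBC: "G = B * C" and L0B: "L0 * B = 1\<^sub>m r" and CR0: "C * R0 = 1\<^sub>m r"
    by (rule rank_factorization[OF G])
  define E where "E = 1\<^sub>m n - R0 * C"
  have E: "E \<in> carrier_mat n n" unfolding E_def using R0 C by auto
  have "C * E = C * 1\<^sub>m n - C * (R0 * C)"
    unfolding E_def by (rule mult_minus_distrib_mat[OF C]) (use R0 C in auto)
  then have CE: "C * E = 0\<^sub>m r n" using C CR0 by (simp flip: assoc_mult_mat[OF C R0 C])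
  have "E * E = 1\<^sub>m n * E - R0 * C * E"
    by (subst (1) E_def, rule minus_mult_distrib_mat) (use R0 C E in auto)
  then have "E * E = E" using CE E R0 C by (simp add: assoc_mult_mat[OF R0 C E])
  then obtain k K L where K: "K \<in> carrier_mat n k" and L: "L \<in> carrier_mat k n"
    and EKL: "E = K * L" and LK: "L * K = 1\<^sub>m k"
    by (rule idempotent_mat_split[OF E])
  have "C * K = C * E * K" using EKL LK C K L by (simp add: assoc_mult_mat_dims)
  then have "G * K = 0\<^sub>m m k" using GBC CE B C K by simp
  moreover have "K * L + (R0 * L0) * G = 1\<^sub>m n"
  proof -
    have "(R0 * L0) * G = R0 * ((L0 * B) * C)" using GBC B C R0 L0 by (simp add: assoc_mult_mat_dims)
    then show ?thesis unfolding EKL[symmetric] E_def using L0B R0 C by (auto intro!: eq_matI)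
  qed
  ultimately show thesis using that[OF K L mult_carrier_mat[OF R0 L0] _ LK] by blast
qed

lemma mat_cokernel_complement:
  fixes G :: "'a::field mat"
  assumes G: "G \<in> carrier_mat m n"
  obtains q Q S X where "Q \<in> carrier_mat q m" "S \<in> carrier_mat m q" "X \<in> carrier_mat n m"
    "Q * G = 0\<^sub>m q n" "Q * S = 1\<^sub>m q" "G * X + S * Q = 1\<^sub>m m"
proof -
  have Gt: "transpose_mat G \<in> carrier_mat n m" using G by simp
  obtain q K L Y where K: "K \<in> carrier_mat m q" and L: "L \<in> carrier_mat q m" and Y: "Y \<in> carrier_mat m n"
    and GK: "transpose_mat G * K = 0\<^sub>m n q" and LK: "L * K = 1\<^sub>m q"
    and split: "K * L + Y * transpose_mat G = 1\<^sub>m m"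
    by (rule mat_kernel_complement[OF Gt])
  have "transpose_mat K * G = 0\<^sub>m q n"
    using arg_cong[OF GK, of transpose_mat] transpose_mult[OF Gt K] by simp
  moreover have "transpose_mat K * transpose_mat L = 1\<^sub>m q"
    using arg_cong[OF LK, of transpose_mat] transpose_mult[OF L K] by simp
  moreover have "G * transpose_mat Y + transpose_mat L * transpose_mat K = 1\<^sub>m m"
  proof -
    have "transpose_mat (K * L + Y * transpose_mat G) = transpose_mat L * transpose_mat K + G * transpose_mat Y"
      using K L Y Gt by (simp add: transpose_add[of _ m m] transpose_mult)
    then show ?thesis using split K L Y G by (simp add: comm_add_mat[of "G * transpose_mat Y" m m])
  qed
  moreover have "transpose_mat K \<in> carrier_mat q m" "transpose_mat L \<in> carrier_mat m q"
    "transpose_mat Y \<in> carrier_mat n m" using K L Y by auto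
  ultimately show thesis using that by blast
qed

lemma mat_eq_by_mult_vecI:
  fixes A B :: "'a::comm_ring_1 mat"
  assumes A: "A \<in> carrier_mat m n" and B: "B \<in> carrier_mat m n"
    and eq: "\<And>v. v \<in> carrier_vec n \<Longrightarrow> A *\<^sub>v v = B *\<^sub>v v"
  shows "A = B"
proof (rule eq_matI)
  fix i j assume i: "i < dim_row B" and j: "j < dim_col B"
  have "A $$ (i,j) = (A *\<^sub>v unit_vec n j) $ i" using A B i j by (simp add: scalar_prod_right_unit)
  also have "\<dots> = (B *\<^sub>v unit_vec n j) $ i" using eq[of "unit_vec n j"] by simp
  also have "\<dots> = B $$ (i,j)" using A B i j by (simp add: scalar_prod_right_unit)
  finally show "A $$ (i,j) = B $$ (i,j)" .
qed (use A B in auto)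

lemma mat_inj_iff_left_invertible:
  fixes A :: "'a::field mat"
  assumes A: "A \<in> carrier_mat m n"
  shows "(\<forall>x \<in> carrier_vec n. \<forall>y \<in> carrier_vec n. A *\<^sub>v x = A *\<^sub>v y \<longrightarrow> x = y)
    \<longleftrightarrow> (\<exists>Y \<in> carrier_mat n m. Y * A = 1\<^sub>m n)"
proof
  assume inj: "\<forall>x \<in> carrier_vec n. \<forall>y \<in> carrier_vec n. A *\<^sub>v x = A *\<^sub>v y \<longrightarrow> x = y"
  obtain k K L Y where K: "K \<in> carrier_mat n k" and L: "L \<in> carrier_mat k n" and Y: "Y \<in> carrier_mat n m"
    and AK: "A * K = 0\<^sub>m m k" and split: "K * L + Y * A = 1\<^sub>m n"
    by (rule mat_kernel_complement[OF A])
  have "Y * A = 1\<^sub>m n"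
  proof (rule mat_eq_by_mult_vecI)
    fix v :: "'a vec" assume v: "v \<in> carrier_vec n"
    have "A *\<^sub>v (K *\<^sub>v (L *\<^sub>v v)) = A *\<^sub>v 0\<^sub>v n"
      using AK A K L v by (simp flip: assoc_mult_mat_vec[OF A K])
    then have "K *\<^sub>v (L *\<^sub>v v) = 0\<^sub>v n" using inj K L v by auto
    moreover have "K *\<^sub>v (L *\<^sub>v v) + (Y * A) *\<^sub>v v = v"
      using arg_cong[OF split, of "\<lambda>M. M *\<^sub>v v"] K L Y A v by (simp add: add_mult_distrib_mat_vec[of _ n n])
    ultimately show "(Y * A) *\<^sub>v v = 1\<^sub>m n *\<^sub>v v" using Y A v by simp
  qed (use Y A in auto)
  then show "\<exists>Y \<in> carrier_mat n m. Y * A = 1\<^sub>m n" using Y by blast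
next
  assume "\<exists>Y \<in> carrier_mat n m. Y * A = 1\<^sub>m n"
  then obtain Y where Y: "Y \<in> carrier_mat n m" and YA: "Y * A = 1\<^sub>m n" by blast
  have "x = Y *\<^sub>v (A *\<^sub>v x)" if "x \<in> carrier_vec n" for x
    using that assoc_mult_mat_vec[OF Y A that] YA by simp
  then show "\<forall>x \<in> carrier_vec n. \<forall>y \<in> carrier_vec n. A *\<^sub>v x = A *\<^sub>v y \<longrightarrow> x = y"
    by metis
qed

lemma mat_surj_iff_right_invertible:
  fixes A :: "'a::field mat"
  assumes A: "A \<in> carrier_mat m n"
  shows "(\<forall>y \<in> carrier_vec m. \<exists>x \<in> carrier_vec n. A *\<^sub>v x = y)
    \<longleftrightarrow> (\<exists>X \<in> carrier_mat n m. A * X = 1\<^sub>m m)"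
proof
  assume surj: "\<forall>y \<in> carrier_vec m. \<exists>x \<in> carrier_vec n. A *\<^sub>v x = y"
  obtain q Q S X where Q: "Q \<in> carrier_mat q m" and S: "S \<in> carrier_mat m q" and X: "X \<in> carrier_mat n m"
    and QA: "Q * A = 0\<^sub>m q n" and split: "A * X + S * Q = 1\<^sub>m m"
    by (rule mat_cokernel_complement[OF A])
  have "A * X = 1\<^sub>m m"
  proof (rule mat_eq_by_mult_vecI)
    fix y :: "'a vec" assume y: "y \<in> carrier_vec m"
    then obtain x where x: "x \<in> carrier_vec n" and Ax: "A *\<^sub>v x = y" using surj by blast
    have "Q *\<^sub>v y = 0\<^sub>v q" using QA x unfolding Ax[symmetric] by (simp flip: assoc_mult_mat_vec[OF Q A x])
    moreover have "(A * X) *\<^sub>v y + S *\<^sub>v (Q *\<^sub>v y) = y"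
      using arg_cong[OF split, of "\<lambda>M. M *\<^sub>v y"] A X S Q y by (simp add: add_mult_distrib_mat_vec[of _ m m])
    ultimately show "(A * X) *\<^sub>v y = 1\<^sub>m m *\<^sub>v y" using A X S y by simp
  qed (use A X in auto)
  then show "\<exists>X \<in> carrier_mat n m. A * X = 1\<^sub>m m" using X by blast
next
  assume "\<exists>X \<in> carrier_mat n m. A * X = 1\<^sub>m m"
  then obtain X where X: "X \<in> carrier_mat n m" and AX: "A * X = 1\<^sub>m m" by blast
  have "A *\<^sub>v (X *\<^sub>v y) = y" if "y \<in> carrier_vec m" for y
    using that assoc_mult_mat_vec[OF A X that] AX by simp
  then show "\<forall>y \<in> carrier_vec m. \<exists>x \<in> carrier_vec n. A *\<^sub>v x = y"
    using X by (meson mult_mat_vec_carrier)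
qed

lemma rank_factorization_family:
  fixes A :: "'i \<Rightarrow> 'a::field mat"
  assumes "\<And>i. A i \<in> carrier_mat (n i) (m i)"
  obtains r B C L R where "\<And>i. B i \<in> carrier_mat (n i) (r i)" "\<And>i. C i \<in> carrier_mat (r i) (m i)"
    "\<And>i. L i \<in> carrier_mat (r i) (n i)" "\<And>i. R i \<in> carrier_mat (m i) (r i)"
    "\<And>i. A i = B i * C i" "\<And>i. L i * B i = 1\<^sub>m (r i)" "\<And>i. C i * R i = 1\<^sub>m (r i)"
proof -
  have "\<exists>r B C L R. B \<in> carrier_mat (n i) r \<and> C \<in> carrier_mat r (m i) \<and> L \<in> carrier_mat r (n i)
      \<and> R \<in> carrier_mat (m i) r \<and> A i = B * C \<and> L * B = 1\<^sub>m r \<and> C * R = 1\<^sub>m r" for i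
    by (rule rank_factorization[OF assms]) blast
  then show thesis using that by metis
qed

lemma mat_kernel_complement_family:
  fixes G :: "'i \<Rightarrow> 'a::field mat"
  assumes "\<And>i. G i \<in> carrier_mat (m i) (n i)"
  obtains k K L Y where "\<And>i. K i \<in> carrier_mat (n i) (k i)" "\<And>i. L i \<in> carrier_mat (k i) (n i)"
    "\<And>i. Y i \<in> carrier_mat (n i) (m i)" "\<And>i. G i * K i = 0\<^sub>m (m i) (k i)"
    "\<And>i. L i * K i = 1\<^sub>m (k i)" "\<And>i. K i * L i + Y i * G i = 1\<^sub>m (n i)"
proof -
  have "\<exists>k K L Y. K \<in> carrier_mat (n i) k \<and> L \<in> carrier_mat k (n i) \<and> Y \<in> carrier_mat (n i) (m i)
      \<and> G i * K = 0\<^sub>m (m i) k \<and> L * K = 1\<^sub>m k \<and> K * L + Y * G i = 1\<^sub>m (n i)" for i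
    by (rule mat_kernel_complement[OF assms]) blast
  then show thesis using that by metis
qed

lemma mat_cokernel_complement_family:
  fixes G :: "'i \<Rightarrow> 'a::field mat"
  assumes "\<And>i. G i \<in> carrier_mat (m i) (n i)"
  obtains q Q S X where "\<And>i. Q i \<in> carrier_mat (q i) (m i)" "\<And>i. S i \<in> carrier_mat (m i) (q i)"
    "\<And>i. X i \<in> carrier_mat (n i) (m i)" "\<And>i. Q i * G i = 0\<^sub>m (q i) (n i)"
    "\<And>i. Q i * S i = 1\<^sub>m (q i)" "\<And>i. G i * X i + S i * Q i = 1\<^sub>m (m i)"
proof -
  have "\<exists>q Q S X. Q \<in> carrier_mat q (m i) \<and> S \<in> carrier_mat (m i) q \<and> X \<in> carrier_mat (n i) (m i)
      \<and> Q * G i = 0\<^sub>m q (n i) \<and> Q * S = 1\<^sub>m q \<and> G i * X + S * Q = 1\<^sub>m (m i)" for i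
    by (rule mat_cokernel_complement[OF assms]) blast
  then show thesis using that by metis
qed

section \<open>Block matrices\<close>

definition append_cols :: "'a::zero mat \<Rightarrow> 'a mat \<Rightarrow> 'a mat" where
  "append_cols A B = four_block_mat A B (0\<^sub>m 0 (dim_col A)) (0\<^sub>m 0 (dim_col B))"

definition block_diag :: "'a::zero mat \<Rightarrow> 'a mat \<Rightarrow> 'a mat" where
  "block_diag A B = four_block_mat A (0\<^sub>m (dim_row A) (dim_col B)) (0\<^sub>m (dim_row B) (dim_col A)) B"

lemma carrier_append_cols[simp]:
  "A \<in> carrier_mat n a \<Longrightarrow> B \<in> carrier_mat n b \<Longrightarrow> append_cols A B \<in> carrier_mat n (a + b)"
  unfolding append_cols_def by auto

lemma carrier_block_diag[simp]:
  "A \<in> carrier_mat a c \<Longrightarrow> B \<in> carrier_mat b d \<Longrightarrow> block_diag A B \<in> carrier_mat (a + b) (c + d)"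
  unfolding block_diag_def by auto

lemma four_block_mat_empty_blocks:
  assumes "A \<in> carrier_mat n m" "B \<in> carrier_mat n 0" "C \<in> carrier_mat 0 m" "D \<in> carrier_mat 0 0"
  shows "four_block_mat A B C D = A"
  by (rule eq_matI) (use assms in auto)

lemma carrier_mat_no_rows: "A \<in> carrier_mat 0 m \<Longrightarrow> A = 0\<^sub>m 0 m"
  by (rule eq_matI) auto

lemma carrier_mat_no_cols: "A \<in> carrier_mat n 0 \<Longrightarrow> A = 0\<^sub>m n 0"
  by (rule eq_matI) auto

lemma append_cols_mult_append_rows:
  fixes X :: "'a::comm_ring_1 mat"
  assumes "X \<in> carrier_mat n a" "Y \<in> carrier_mat n b" "A \<in> carrier_mat a m" "B \<in> carrier_mat b m"
  shows "append_cols X Y * (A @\<^sub>r B) = X * A + Y * B"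
proof -
  have "append_cols X Y * (A @\<^sub>r B) = four_block_mat (X * A + Y * B) (X * 0\<^sub>m a 0 + Y * 0\<^sub>m b 0)
      (0\<^sub>m 0 a * A + 0\<^sub>m 0 b * B) (0\<^sub>m 0 a * 0\<^sub>m a 0 + 0\<^sub>m 0 b * 0\<^sub>m b 0)"
    unfolding append_cols_def append_rows_def carrier_matD[OF assms(1)] carrier_matD[OF assms(2)]
      carrier_matD[OF assms(3)] carrier_matD[OF assms(4)]
    by (rule mult_four_block_mat) (use assms in auto)
  also have "\<dots> = X * A + Y * B" using assms by (intro four_block_mat_empty_blocks) auto
  finally show ?thesis .
qed

lemma append_cols_mult_block_diag:
  fixes X :: "'a::comm_ring_1 mat"
  assumes "X \<in> carrier_mat n a" "Y \<in> carrier_mat n b" "A \<in> carrier_mat a c" "B \<in> carrier_mat b d"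
  shows "append_cols X Y * block_diag A B = append_cols (X * A) (Y * B)"
proof -
  have "append_cols X Y * block_diag A B = four_block_mat (X * A + Y * 0\<^sub>m b c) (X * 0\<^sub>m a d + Y * B)
      (0\<^sub>m 0 a * A + 0\<^sub>m 0 b * 0\<^sub>m b c) (0\<^sub>m 0 a * 0\<^sub>m a d + 0\<^sub>m 0 b * B)"
    unfolding append_cols_def block_diag_def carrier_matD[OF assms(1)] carrier_matD[OF assms(2)]
      carrier_matD[OF assms(3)] carrier_matD[OF assms(4)]
    by (rule mult_four_block_mat) (use assms in auto)
  also have "\<dots> = append_cols (X * A) (Y * B)"
    unfolding append_cols_def using assms by (auto intro!: arg_cong2[where f="four_block_mat _ _"] carrier_mat_no_rows)
  finally show ?thesis .
qed

lemma block_diag_mult_append_rows: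
  fixes A :: "'a::comm_ring_1 mat"
  assumes "A \<in> carrier_mat c a" "B \<in> carrier_mat d b" "X \<in> carrier_mat a n" "Y \<in> carrier_mat b n"
  shows "block_diag A B * (X @\<^sub>r Y) = (A * X) @\<^sub>r (B * Y)"
proof -
  have "block_diag A B * (X @\<^sub>r Y) = four_block_mat (A * X + 0\<^sub>m c b * Y) (A * 0\<^sub>m a 0 + 0\<^sub>m c b * 0\<^sub>m b 0)
      (0\<^sub>m d a * X + B * Y) (0\<^sub>m d a * 0\<^sub>m a 0 + B * 0\<^sub>m b 0)"
    unfolding append_rows_def block_diag_def carrier_matD[OF assms(1)] carrier_matD[OF assms(2)]
      carrier_matD[OF assms(3)] carrier_matD[OF assms(4)]
    by (rule mult_four_block_mat) (use assms in auto)
  also have "\<dots> = (A * X) @\<^sub>r (B * Y)"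
    unfolding append_rows_def using assms by (auto intro!: arg_cong2[where f="four_block_mat _ _"] carrier_mat_no_cols)
  finally show ?thesis .
qed

lemma mult_append_cols:
  fixes X :: "'a::comm_ring_1 mat"
  assumes "Z \<in> carrier_mat p n" "X \<in> carrier_mat n a" "Y \<in> carrier_mat n b"
  shows "Z * append_cols X Y = append_cols (Z * X) (Z * Y)"
proof -
  have "Z * append_cols X Y = four_block_mat Z (0\<^sub>m p 0) (0\<^sub>m 0 n) (0\<^sub>m 0 0) * append_cols X Y"
    using assms by (simp add: four_block_mat_empty_blocks)
  also have "\<dots> = four_block_mat (Z * X + 0\<^sub>m p 0 * 0\<^sub>m 0 a) (Z * Y + 0\<^sub>m p 0 * 0\<^sub>m 0 b)
      (0\<^sub>m 0 n * X + 0\<^sub>m 0 0 * 0\<^sub>m 0 a) (0\<^sub>m 0 n * Y + 0\<^sub>m 0 0 * 0\<^sub>m 0 b)"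
    unfolding append_cols_def carrier_matD[OF assms(2)] carrier_matD[OF assms(3)]
    by (rule mult_four_block_mat) (use assms in auto)
  also have "\<dots> = append_cols (Z * X) (Z * Y)"
    unfolding append_cols_def using assms by (auto intro!: arg_cong2[where f="four_block_mat _ _"] carrier_mat_no_rows)
  finally show ?thesis .
qed

lemma append_rows_mult:
  fixes X :: "'a::comm_ring_1 mat"
  assumes "X \<in> carrier_mat a n" "Y \<in> carrier_mat b n" "Z \<in> carrier_mat n p"
  shows "(X @\<^sub>r Y) * Z = (X * Z) @\<^sub>r (Y * Z)"
proof -
  have "(X @\<^sub>r Y) * Z = (X @\<^sub>r Y) * four_block_mat Z (0\<^sub>m n 0) (0\<^sub>m 0 p) (0\<^sub>m 0 0)"
    using assms by (simp add: four_block_mat_empty_blocks)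
  also have "\<dots> = four_block_mat (X * Z + 0\<^sub>m a 0 * 0\<^sub>m 0 p) (X * 0\<^sub>m n 0 + 0\<^sub>m a 0 * 0\<^sub>m 0 0)
      (Y * Z + 0\<^sub>m b 0 * 0\<^sub>m 0 p) (Y * 0\<^sub>m n 0 + 0\<^sub>m b 0 * 0\<^sub>m 0 0)"
    unfolding append_rows_def carrier_matD[OF assms(1)] carrier_matD[OF assms(2)]
    by (rule mult_four_block_mat) (use assms in auto)
  also have "\<dots> = (X * Z) @\<^sub>r (Y * Z)"
    unfolding append_rows_def using assms by (auto intro!: arg_cong2[where f="four_block_mat _ _"] carrier_mat_no_cols)
  finally show ?thesis .
qed

lemma append_cols_right_cancel:
  assumes "X \<in> carrier_mat n a" "Y \<in> carrier_mat n b" "X' \<in> carrier_mat n a" "Y' \<in> carrier_mat n b"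
    and eq: "append_cols X Y = append_cols X' Y'"
  shows "Y = Y'"
proof (rule eq_matI)
  fix i j assume "i < dim_row Y'" "j < dim_col Y'"
  then have "append_cols X Y $$ (i, a + j) = Y $$ (i,j)" "append_cols X' Y' $$ (i, a + j) = Y' $$ (i,j)"
    unfolding append_cols_def using assms by auto
  then show "Y $$ (i,j) = Y' $$ (i,j)" using eq by simp
qed (use assms in auto)

lemma append_rows_lower_cancel:
  assumes "X \<in> carrier_mat a n" "Y \<in> carrier_mat b n" "X' \<in> carrier_mat a n" "Y' \<in> carrier_mat b n"
    and eq: "X @\<^sub>r Y = X' @\<^sub>r Y'"
  shows "Y = Y'"
proof (rule eq_matI)
  fix i j assume "i < dim_row Y'" "j < dim_col Y'"
  then have "(X @\<^sub>r Y) $$ (a + i, j) = Y $$ (i,j)" "(X' @\<^sub>r Y') $$ (a + i, j) = Y' $$ (i,j)"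
    unfolding append_rows_def using assms by auto
  then show "Y $$ (i,j) = Y' $$ (i,j)" using eq by simp
qed (use assms in auto)

section \<open>Representations\<close>

lemma dimv_pair[simp]: "dimv (d, a) = d"
  by (simp add: dimv_def)

lemma amap_pair[simp]: "amap (d, a) = a"
  by (simp add: amap_def)

context
  fixes s t :: "'a \<Rightarrow> 'v"
begin

lemma is_rep_carrier: "is_rep s t V \<Longrightarrow> amap V al \<in> carrier_mat (dimv V (t al)) (dimv V (s al))"
  by (simp add: is_rep_def)

lemma rep_hom_carrier: "rep_hom s t V W g \<Longrightarrow> g i \<in> carrier_mat (dimv W i) (dimv V i)"
  by (simp add: rep_hom_def)

lemma rep_hom_commute: "rep_hom s t V W g \<Longrightarrow> g (t al) * amap V al = amap W al * g (s al)"
  by (simp add: rep_hom_def)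

lemma rep_hom_id: "is_rep s t V \<Longrightarrow> rep_hom s t V V (\<lambda>i. 1\<^sub>m (dimv V i))"
  unfolding rep_hom_def by (metis is_rep_carrier left_mult_one_mat one_carrier_mat right_mult_one_mat)

lemma rep_hom_zero: "is_rep s t V \<Longrightarrow> is_rep s t W \<Longrightarrow> rep_hom s t V W (\<lambda>i. 0\<^sub>m (dimv W i) (dimv V i))"
  unfolding rep_hom_def by (metis is_rep_carrier left_mult_zero_mat right_mult_zero_mat zero_carrier_mat)

lemma rep_hom_comp:
  assumes U: "is_rep s t U" and V: "is_rep s t V" and W: "is_rep s t W"
    and g: "rep_hom s t V W g" and f: "rep_hom s t U V f"
  shows "rep_hom s t U W (comp_hom g f)"
  unfolding rep_hom_def comp_hom_def
proof (intro conjI allI)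
  fix i show "g i * f i \<in> carrier_mat (dimv W i) (dimv U i)"
    using rep_hom_carrier[OF g] rep_hom_carrier[OF f] by (rule mult_carrier_mat)
next
  fix al
  note c = rep_hom_carrier[OF g, of "t al"] rep_hom_carrier[OF f, of "t al"]
    rep_hom_carrier[OF g, of "s al"] rep_hom_carrier[OF f, of "s al"] is_rep_carrier[OF U, of al]
    is_rep_carrier[OF V, of al] is_rep_carrier[OF W, of al]
  have "g (t al) * f (t al) * amap U al = (g (t al) * amap V al) * f (s al)"
    using c rep_hom_commute[OF f, of al] by (simp add: assoc_mult_mat_dims)
  also have "\<dots> = amap W al * (g (s al) * f (s al))"
    using c rep_hom_commute[OF g, of al] by (simp add: assoc_mult_mat_dims)
  finally show "g (t al) * f (t al) * amap U al = amap W al * (g (s al) * f (s al))" .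
qed

text \<open>With X i * Y i = 1, this is the subrepresentation im Y of W if im Y is invariant, and the
  quotient of W by ker X if ker X is invariant.\<close>

definition induced_rep :: "('v,'a) qrep \<Rightarrow> ('v \<Rightarrow> nat) \<Rightarrow> ('v \<Rightarrow> complex mat) \<Rightarrow> ('v \<Rightarrow> complex mat)
    \<Rightarrow> ('v,'a) qrep" where
  "induced_rep W r X Y = (r, \<lambda>al. X (t al) * amap W al * Y (s al))"

lemma is_rep_induced_rep:
  assumes "is_rep s t W" "\<And>i. X i \<in> carrier_mat (r i) (dimv W i)" "\<And>i. Y i \<in> carrier_mat (dimv W i) (r i)"
  shows "is_rep s t (induced_rep W r X Y)"
  unfolding is_rep_def induced_rep_def
  using mult_carrier_mat[OF mult_carrier_mat[OF assms(2) is_rep_carrier[OF assms(1)]] assms(3)] by simp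

lemma rep_hom_induced_embedding:
  assumes W: "is_rep s t W" and X: "\<And>i. X i \<in> carrier_mat (r i) (dimv W i)"
    and Y: "\<And>i. Y i \<in> carrier_mat (dimv W i) (r i)" and XY: "\<And>i. X i * Y i = 1\<^sub>m (r i)"
    and Z: "\<And>al. Z al \<in> carrier_mat (r (t al)) (r (s al))"
    and WY: "\<And>al. amap W al * Y (s al) = Y (t al) * Z al"
  shows "rep_hom s t (induced_rep W r X Y) W Y"
  unfolding rep_hom_def
proof (intro conjI allI)
  fix al
  note c = X[of "t al"] Y[of "t al"] Y[of "s al"] Z[of al] is_rep_carrier[OF W, of al]
  have "Y (t al) * (X (t al) * amap W al * Y (s al)) = Y (t al) * ((X (t al) * Y (t al)) * Z al)"
    using c WY[of al] by (simp add: assoc_mult_mat_dims)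
  also have "\<dots> = amap W al * Y (s al)" using c XY[of "t al"] WY[of al] by simp
  finally show "Y (t al) * amap (induced_rep W r X Y) al = amap W al * Y (s al)"
    by (simp add: induced_rep_def)
qed (simp add: Y induced_rep_def)

lemma rep_hom_induced_projection:
  assumes W: "is_rep s t W" and X: "\<And>i. X i \<in> carrier_mat (r i) (dimv W i)"
    and Y: "\<And>i. Y i \<in> carrier_mat (dimv W i) (r i)" and XY: "\<And>i. X i * Y i = 1\<^sub>m (r i)"
    and Z: "\<And>al. Z al \<in> carrier_mat (r (t al)) (r (s al))"
    and XW: "\<And>al. X (t al) * amap W al = Z al * X (s al)"
  shows "rep_hom s t W (induced_rep W r X Y) X"
  unfolding rep_hom_def
proof (intro conjI allI)
  fix al
  note c = X[of "t al"] X[of "s al"] Y[of "s al"] Z[of al] is_rep_carrier[OF W, of al]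
  have "X (t al) * amap W al * Y (s al) * X (s al) = Z al * (X (s al) * Y (s al)) * X (s al)"
    using c XW[of al] by (simp add: assoc_mult_mat_dims)
  also have "\<dots> = X (t al) * amap W al" using c XY[of "s al"] XW[of al] by simp
  finally show "X (t al) * amap W al = amap (induced_rep W r X Y) al * X (s al)"
    by (simp add: induced_rep_def)
qed (simp add: X induced_rep_def)

lemma rep_hom_cancel_left:
  assumes U: "is_rep s t U" and V': "is_rep s t V'" and V: "is_rep s t V"
    and B: "rep_hom s t V' V B" and L: "\<And>i. L i \<in> carrier_mat (dimv V' i) (dimv V i)"
    and LB: "\<And>i. L i * B i = 1\<^sub>m (dimv V' i)" and C: "\<And>i. C i \<in> carrier_mat (dimv V' i) (dimv U i)"
    and BC: "rep_hom s t U V (comp_hom B C)"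
  shows "rep_hom s t U V' C"
  unfolding rep_hom_def
proof (intro conjI allI)
  fix al
  note c = rep_hom_carrier[OF B, of "t al"] rep_hom_carrier[OF B, of "s al"] L[of "t al"]
    C[of "t al"] C[of "s al"] is_rep_carrier[OF U, of al] is_rep_carrier[OF V, of al]
    is_rep_carrier[OF V', of al]
  have BC_al: "B (t al) * C (t al) * amap U al = amap V al * (B (s al) * C (s al))"
    using rep_hom_commute[OF BC, of al] by (simp add: comp_hom_def)
  have "C (t al) * amap U al = (L (t al) * B (t al)) * C (t al) * amap U al"
    using c LB[of "t al"] by simp
  also have "\<dots> = L (t al) * (B (t al) * C (t al) * amap U al)"
    using c by (simp add: assoc_mult_mat_dims)
  also have "\<dots> = L (t al) * (amap V al * B (s al)) * C (s al)"
    unfolding BC_al using c by (simp add: assoc_mult_mat_dims)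
  also have "\<dots> = (L (t al) * B (t al)) * amap V' al * C (s al)"
    unfolding rep_hom_commute[OF B, of al, symmetric] using c by (simp add: assoc_mult_mat_dims)
  also have "\<dots> = amap V' al * C (s al)"
    using c LB[of "t al"] by simp
  finally show "C (t al) * amap U al = amap V' al * C (s al)" .
qed (rule C)

lemma rep_hom_cancel_right:
  assumes V: "is_rep s t V" and W: "is_rep s t W" and I: "is_rep s t I"
    and C: "rep_hom s t V W C" and R: "\<And>i. R i \<in> carrier_mat (dimv V i) (dimv W i)"
    and CR: "\<And>i. C i * R i = 1\<^sub>m (dimv W i)" and B: "\<And>i. B i \<in> carrier_mat (dimv I i) (dimv W i)"
    and BC: "rep_hom s t V I (comp_hom B C)"
  shows "rep_hom s t W I B"
  unfolding rep_hom_def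
proof (intro conjI allI)
  fix al
  note c = rep_hom_carrier[OF C, of "t al"] rep_hom_carrier[OF C, of "s al"] R[of "s al"]
    B[of "t al"] B[of "s al"] is_rep_carrier[OF V, of al] is_rep_carrier[OF W, of al]
    is_rep_carrier[OF I, of al]
  have BC_al: "B (t al) * C (t al) * amap V al = amap I al * (B (s al) * C (s al))"
    using rep_hom_commute[OF BC, of al] by (simp add: comp_hom_def)
  have "B (t al) * amap W al = B (t al) * amap W al * (C (s al) * R (s al))"
    using c CR[of "s al"] by simp
  also have "\<dots> = B (t al) * (C (t al) * amap V al) * R (s al)"
    unfolding rep_hom_commute[OF C, of al] using c by (simp add: assoc_mult_mat_dims)
  also have "\<dots> = amap I al * B (s al) * (C (s al) * R (s al))"
    using c BC_al by (simp add: assoc_mult_mat_dims)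
  also have "\<dots> = amap I al * B (s al)"
    using c CR[of "s al"] by simp
  finally show "B (t al) * amap W al = amap I al * B (s al)" .
qed (rule B)

lemma rep_hom_inverse:
  assumes V: "is_rep s t V" and W: "is_rep s t W" and g: "rep_hom s t V W g"
    and H: "\<And>i. H i \<in> carrier_mat (dimv V i) (dimv W i)"
    and Hg: "\<And>i. H i * g i = 1\<^sub>m (dimv V i)" and gH: "\<And>i. g i * H i = 1\<^sub>m (dimv W i)"
  shows "rep_hom s t W V H"
  unfolding rep_hom_def
proof (intro conjI allI)
  fix al
  note c = H[of "t al"] H[of "s al"] rep_hom_carrier[OF g, of "t al"] rep_hom_carrier[OF g, of "s al"]
    is_rep_carrier[OF V, of al] is_rep_carrier[OF W, of al]
  have "H (t al) * amap W al = H (t al) * (amap W al * g (s al)) * H (s al)"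
    using c gH[of "s al"] by (simp add: assoc_mult_mat_dims)
  also have "\<dots> = (H (t al) * g (t al)) * amap V al * H (s al)"
    unfolding rep_hom_commute[OF g, of al, symmetric] using c by (simp add: assoc_mult_mat_dims)
  also have "\<dots> = amap V al * H (s al)"
    using c Hg[of "t al"] by simp
  finally show "H (t al) * amap W al = amap V al * H (s al)" .
qed (rule H)

lemma rep_hom_kernel_invariant:
  assumes W: "is_rep s t W" and V: "is_rep s t V" and rg: "rep_hom s t W V g"
    and K: "\<And>i. K i \<in> carrier_mat (dimv W i) (k i)" and L: "\<And>i. L i \<in> carrier_mat (k i) (dimv W i)"
    and Y: "\<And>i. Y i \<in> carrier_mat (dimv W i) (dimv V i)" and gK: "\<And>i. g i * K i = 0\<^sub>m (dimv V i) (k i)"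
    and split: "\<And>i. K i * L i + Y i * g i = 1\<^sub>m (dimv W i)"
  shows "amap W al * K (s al) = K (t al) * (L (t al) * amap W al * K (s al))"
proof -
  note c = K[of "t al"] K[of "s al"] L[of "t al"] Y[of "t al"] rep_hom_carrier[OF rg, of "t al"]
    rep_hom_carrier[OF rg, of "s al"] is_rep_carrier[OF W, of al] is_rep_carrier[OF V, of al]
  have gWK: "g (t al) * (amap W al * K (s al)) = 0\<^sub>m (dimv V (t al)) (k (s al))"
    using c gK[of "s al"] rep_hom_commute[OF rg, of al] by (simp flip: assoc_mult_mat_dims)
  have "amap W al * K (s al) = (K (t al) * L (t al) + Y (t al) * g (t al)) * (amap W al * K (s al))"
    using c split[of "t al"] by simp
  also have "\<dots> = K (t al) * (L (t al) * amap W al * K (s al)) + Y (t al) * (g (t al) * (amap W al * K (s al)))"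
    using c add_mult_distrib_mat[OF mult_carrier_mat[OF c(1,3)] mult_carrier_mat[OF c(4,5)]
        mult_carrier_mat[OF c(7,2)]]
    by (simp add: assoc_mult_mat_dims)
  also have "\<dots> = K (t al) * (L (t al) * amap W al * K (s al))"
    using c gWK by simp
  finally show ?thesis .
qed

lemma rep_hom_cokernel_invariant:
  assumes V: "is_rep s t V" and W: "is_rep s t W" and rg: "rep_hom s t V W g"
    and Q: "\<And>i. Q i \<in> carrier_mat (q i) (dimv W i)" and S: "\<And>i. S i \<in> carrier_mat (dimv W i) (q i)"
    and X: "\<And>i. X i \<in> carrier_mat (dimv V i) (dimv W i)" and Qg: "\<And>i. Q i * g i = 0\<^sub>m (q i) (dimv V i)"
    and split: "\<And>i. g i * X i + S i * Q i = 1\<^sub>m (dimv W i)"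
  shows "Q (t al) * amap W al = (Q (t al) * amap W al * S (s al)) * Q (s al)"
proof -
  note c = Q[of "t al"] Q[of "s al"] S[of "s al"] X[of "s al"] rep_hom_carrier[OF rg, of "t al"]
    rep_hom_carrier[OF rg, of "s al"] is_rep_carrier[OF W, of al] is_rep_carrier[OF V, of al]
  have QWg: "Q (t al) * (amap W al * g (s al)) = 0\<^sub>m (q (t al)) (dimv V (s al))"
    using c Qg[of "t al"] rep_hom_commute[OF rg, of al, symmetric] by (simp flip: assoc_mult_mat_dims)
  have "Q (t al) * amap W al = Q (t al) * amap W al * (g (s al) * X (s al) + S (s al) * Q (s al))"
    using c split[of "s al"] by simp
  also have "\<dots> = Q (t al) * (amap W al * g (s al)) * X (s al) + Q (t al) * amap W al * S (s al) * Q (s al)"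
    using c mult_add_distrib_mat[OF mult_carrier_mat[OF c(1,7)] mult_carrier_mat[OF c(6,4)]
        mult_carrier_mat[OF c(3,2)]]
    by (simp add: assoc_mult_mat_dims)
  also have "\<dots> = Q (t al) * amap W al * S (s al) * Q (s al)"
    using c QWg by (simp add: assoc_mult_mat_dims)
  finally show ?thesis .
qed

lemma rep_hom_image_invariant:
  assumes P: "is_rep s t P" and V: "is_rep s t V" and f: "rep_hom s t P V f"
    and B: "\<And>i. B i \<in> carrier_mat (dimv V i) (r i)" and C: "\<And>i. C i \<in> carrier_mat (r i) (dimv P i)"
    and R: "\<And>i. R i \<in> carrier_mat (dimv P i) (r i)"
    and fBC: "\<And>i. f i = B i * C i" and CR: "\<And>i. C i * R i = 1\<^sub>m (r i)"
  shows "amap V al * B (s al) = B (t al) * (C (t al) * amap P al * R (s al))"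
proof -
  note c = B[of "t al"] B[of "s al"] C[of "t al"] C[of "s al"] R[of "s al"]
    is_rep_carrier[OF V, of al] is_rep_carrier[OF P, of al]
  have "amap V al * B (s al) = amap V al * (B (s al) * C (s al)) * R (s al)"
    using c CR[of "s al"] by (simp add: assoc_mult_mat_dims)
  also have "\<dots> = B (t al) * (C (t al) * amap P al * R (s al))"
    unfolding fBC[symmetric] rep_hom_commute[OF f, symmetric] using c
    by (simp add: fBC assoc_mult_mat_dims)
  finally show ?thesis .
qed

lemma rep_hom_coimage_invariant:
  assumes V: "is_rep s t V" and I: "is_rep s t I" and h: "rep_hom s t V I h"
    and B: "\<And>i. B i \<in> carrier_mat (dimv I i) (r i)" and C: "\<And>i. C i \<in> carrier_mat (r i) (dimv V i)"
    and L: "\<And>i. L i \<in> carrier_mat (r i) (dimv I i)"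
    and hBC: "\<And>i. h i = B i * C i" and LB: "\<And>i. L i * B i = 1\<^sub>m (r i)"
  shows "C (t al) * amap V al = (L (t al) * amap I al * B (s al)) * C (s al)"
proof -
  note c = B[of "t al"] B[of "s al"] C[of "t al"] C[of "s al"] L[of "t al"]
    is_rep_carrier[OF V, of al] is_rep_carrier[OF I, of al]
  have "C (t al) * amap V al = (L (t al) * B (t al)) * C (t al) * amap V al"
    using c LB[of "t al"] by simp
  also have "\<dots> = L (t al) * ((B (t al) * C (t al)) * amap V al)"
    using c by (simp add: assoc_mult_mat_dims)
  also have "\<dots> = (L (t al) * amap I al * B (s al)) * C (s al)"
    unfolding hBC[symmetric] rep_hom_commute[OF h] using c
    by (simp add: hBC assoc_mult_mat_dims)
  finally show ?thesis .
qed

definition dsum_rep :: "('v,'a) qrep \<Rightarrow> ('v,'a) qrep \<Rightarrow> ('v,'a) qrep" where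
  "dsum_rep V W = (\<lambda>i. dimv V i + dimv W i, \<lambda>al. block_diag (amap V al) (amap W al))"

lemma is_rep_dsum_rep: "is_rep s t V \<Longrightarrow> is_rep s t W \<Longrightarrow> is_rep s t (dsum_rep V W)"
  unfolding is_rep_def dsum_rep_def by simp

lemma rep_hom_append_cols:
  assumes V: "is_rep s t V" and W: "is_rep s t W" and X: "is_rep s t X"
    and u: "rep_hom s t V X u" and v: "rep_hom s t W X v"
  shows "rep_hom s t (dsum_rep V W) X (\<lambda>i. append_cols (u i) (v i))"
  unfolding rep_hom_def
proof (intro conjI allI)
  fix i show "append_cols (u i) (v i) \<in> carrier_mat (dimv X i) (dimv (dsum_rep V W) i)"
    using rep_hom_carrier[OF u] rep_hom_carrier[OF v] by (simp add: dsum_rep_def)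
next
  fix al
  note c = rep_hom_carrier[OF u, of "t al"] rep_hom_carrier[OF v, of "t al"]
    rep_hom_carrier[OF u, of "s al"] rep_hom_carrier[OF v, of "s al"]
    is_rep_carrier[OF V, of al] is_rep_carrier[OF W, of al] is_rep_carrier[OF X, of al]
  show "append_cols (u (t al)) (v (t al)) * amap (dsum_rep V W) al = amap X al * append_cols (u (s al)) (v (s al))"
    using c rep_hom_commute[OF u, of al] rep_hom_commute[OF v, of al]
    by (simp add: dsum_rep_def append_cols_mult_block_diag mult_append_cols)
qed

lemma rep_hom_append_rows:
  assumes V: "is_rep s t V" and W: "is_rep s t W" and X: "is_rep s t X"
    and u: "rep_hom s t X V u" and v: "rep_hom s t X W v"
  shows "rep_hom s t X (dsum_rep V W) (\<lambda>i. u i @\<^sub>r v i)"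
  unfolding rep_hom_def
proof (intro conjI allI)
  fix i show "u i @\<^sub>r v i \<in> carrier_mat (dimv (dsum_rep V W) i) (dimv X i)"
    using rep_hom_carrier[OF u] rep_hom_carrier[OF v] by (simp add: dsum_rep_def)
next
  fix al
  note c = rep_hom_carrier[OF u, of "t al"] rep_hom_carrier[OF v, of "t al"]
    rep_hom_carrier[OF u, of "s al"] rep_hom_carrier[OF v, of "s al"]
    is_rep_carrier[OF V, of al] is_rep_carrier[OF W, of al] is_rep_carrier[OF X, of al]
  show "(u (t al) @\<^sub>r v (t al)) * amap X al = amap (dsum_rep V W) al * (u (s al) @\<^sub>r v (s al))"
    using c rep_hom_commute[OF u, of al] rep_hom_commute[OF v, of al]
    by (simp add: dsum_rep_def block_diag_mult_append_rows append_rows_mult)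
qed

end

definition hom_left_inv :: "('v,'a) qrep \<Rightarrow> ('v,'a) qrep \<Rightarrow> ('v \<Rightarrow> complex mat) \<Rightarrow> bool" where
  "hom_left_inv V W g \<longleftrightarrow> (\<forall>i. \<exists>Y \<in> carrier_mat (dimv V i) (dimv W i). Y * g i = 1\<^sub>m (dimv V i))"

definition hom_right_inv :: "('v,'a) qrep \<Rightarrow> ('v,'a) qrep \<Rightarrow> ('v \<Rightarrow> complex mat) \<Rightarrow> bool" where
  "hom_right_inv V W g \<longleftrightarrow> (\<forall>i. \<exists>X \<in> carrier_mat (dimv V i) (dimv W i). g i * X = 1\<^sub>m (dimv W i))"

lemma hom_inj_iff_left_inv:
  assumes "\<And>i. g i \<in> carrier_mat (dimv W i) (dimv V i)"
  shows "hom_inj V W g \<longleftrightarrow> hom_left_inv V W g"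
  unfolding hom_inj_def hom_left_inv_def using mat_inj_iff_left_invertible[OF assms] by blast

lemma hom_surj_iff_right_inv:
  assumes "\<And>i. g i \<in> carrier_mat (dimv W i) (dimv V i)"
  shows "hom_surj V W g \<longleftrightarrow> hom_right_inv V W g"
  unfolding hom_surj_def hom_right_inv_def using mat_surj_iff_right_invertible[OF assms] by blast

lemma hom_right_inv_cancel_right:
  assumes g: "\<And>i. g i \<in> carrier_mat (dimv W i) (dimv V i)" and f: "\<And>i. f i \<in> carrier_mat (dimv V i) (dimv U i)"
    and gf: "hom_right_inv U W (comp_hom g f)"
  shows "hom_right_inv V W g"
  unfolding hom_right_inv_def
proof
  fix i
  obtain X where X: "X \<in> carrier_mat (dimv U i) (dimv W i)" and "g i * f i * X = 1\<^sub>m (dimv W i)"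
    using gf unfolding hom_right_inv_def comp_hom_def by blast
  then have "g i * (f i * X) = 1\<^sub>m (dimv W i)" using g[of i] f[of i] X by (simp add: assoc_mult_mat_dims)
  then show "\<exists>X' \<in> carrier_mat (dimv V i) (dimv W i). g i * X' = 1\<^sub>m (dimv W i)"
    using f X by (meson mult_carrier_mat)
qed

lemma hom_left_inv_cancel_left:
  assumes g: "\<And>i. g i \<in> carrier_mat (dimv U i) (dimv V i)" and h: "\<And>i. h i \<in> carrier_mat (dimv W i) (dimv U i)"
    and hg: "hom_left_inv V W (comp_hom h g)"
  shows "hom_left_inv V U g"
  unfolding hom_left_inv_def
proof
  fix i
  obtain Y where Y: "Y \<in> carrier_mat (dimv V i) (dimv W i)" and "Y * (h i * g i) = 1\<^sub>m (dimv V i)"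
    using hg unfolding hom_left_inv_def comp_hom_def by blast
  then have "(Y * h i) * g i = 1\<^sub>m (dimv V i)" using g[of i] h[of i] Y by (simp add: assoc_mult_mat_dims)
  then show "\<exists>Y' \<in> carrier_mat (dimv V i) (dimv U i). Y' * g i = 1\<^sub>m (dimv V i)"
    using h Y by (meson mult_carrier_mat)
qed

lemma hom_two_sided_inverse:
  assumes g: "\<And>i. g i \<in> carrier_mat (dimv W i) (dimv V i)"
    and "hom_left_inv V W g" and "hom_right_inv V W g"
  obtains H where "\<And>i. H i \<in> carrier_mat (dimv V i) (dimv W i)"
    "\<And>i. H i * g i = 1\<^sub>m (dimv V i)" "\<And>i. g i * H i = 1\<^sub>m (dimv W i)"
proof -
  have "\<exists>H \<in> carrier_mat (dimv V i) (dimv W i). H * g i = 1\<^sub>m (dimv V i) \<and> g i * H = 1\<^sub>m (dimv W i)" for i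
  proof -
    obtain Y X where Y: "Y \<in> carrier_mat (dimv V i) (dimv W i)" "Y * g i = 1\<^sub>m (dimv V i)"
      and X: "X \<in> carrier_mat (dimv V i) (dimv W i)" "g i * X = 1\<^sub>m (dimv W i)"
      using assms(2,3) unfolding hom_left_inv_def hom_right_inv_def by blast
    have "Y = Y * (g i * X)" using Y X by simp
    also have "\<dots> = (Y * g i) * X" by (rule assoc_mult_mat[OF Y(1) g X(1), symmetric])
    also have "\<dots> = X" using Y X by simp
    finally have "Y = X" .
    then show ?thesis using Y X by blast
  qed
  then show thesis using that by metis
qed

lemma hom_right_inv_comp:
  assumes g: "\<And>i. g i \<in> carrier_mat (dimv W i) (dimv V i)" and f: "\<And>i. f i \<in> carrier_mat (dimv V i) (dimv U i)"
    and "hom_right_inv V W g" "hom_right_inv U V f"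
  shows "hom_right_inv U W (comp_hom g f)"
  unfolding hom_right_inv_def comp_hom_def
proof
  fix i
  obtain X X' where X: "X \<in> carrier_mat (dimv V i) (dimv W i)" "g i * X = 1\<^sub>m (dimv W i)"
    and X': "X' \<in> carrier_mat (dimv U i) (dimv V i)" "f i * X' = 1\<^sub>m (dimv V i)"
    using assms(3,4) unfolding hom_right_inv_def by blast
  have "g i * f i * (X' * X) = g i * (f i * X') * X"
    using g[of i] f[of i] X(1) X'(1) by (simp add: assoc_mult_mat_dims)
  also have "\<dots> = 1\<^sub>m (dimv W i)" using g[of i] X X' by simp
  finally have "g i * f i * (X' * X) = 1\<^sub>m (dimv W i)" .
  then show "\<exists>X'' \<in> carrier_mat (dimv U i) (dimv W i). g i * f i * X'' = 1\<^sub>m (dimv W i)"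
    using X X' by (meson mult_carrier_mat)
qed

lemma hom_left_inv_comp:
  assumes g: "\<And>i. g i \<in> carrier_mat (dimv W i) (dimv V i)" and f: "\<And>i. f i \<in> carrier_mat (dimv V i) (dimv U i)"
    and "hom_left_inv V W g" "hom_left_inv U V f"
  shows "hom_left_inv U W (comp_hom g f)"
  unfolding hom_left_inv_def comp_hom_def
proof
  fix i
  obtain Y Y' where Y: "Y \<in> carrier_mat (dimv V i) (dimv W i)" "Y * g i = 1\<^sub>m (dimv V i)"
    and Y': "Y' \<in> carrier_mat (dimv U i) (dimv V i)" "Y' * f i = 1\<^sub>m (dimv U i)"
    using assms(3,4) unfolding hom_left_inv_def by blast
  have "Y' * Y * (g i * f i) = Y' * (Y * g i) * f i"
    using g[of i] f[of i] Y(1) Y'(1) by (simp add: assoc_mult_mat_dims)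
  also have "\<dots> = 1\<^sub>m (dimv U i)" using f[of i] Y Y' by simp
  finally have "Y' * Y * (g i * f i) = 1\<^sub>m (dimv U i)" .
  then show "\<exists>Y'' \<in> carrier_mat (dimv U i) (dimv W i). Y'' * (g i * f i) = 1\<^sub>m (dimv U i)"
    using Y Y' by (meson mult_carrier_mat)
qed

section \<open>The category R(P,I)\<close>

context
  fixes s t :: "'a \<Rightarrow> 'v" and P I :: "('v,'a) qrep"
begin

lemma R_obj_iff: "R_obj s t P I (V,f,h) \<longleftrightarrow> is_rep s t V \<and> rep_hom s t P V f \<and> rep_hom s t V I h"
  by (simp add: R_obj_def)

lemma R_hom_iff: "R_hom s t P I (V,f,h) (W,f',h') g \<longleftrightarrow> R_obj s t P I (V,f,h) \<and> R_obj s t P I (W,f',h')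
    \<and> rep_hom s t V W g \<and> comp_hom g f = f' \<and> comp_hom h' g = h"
  by (simp add: R_hom_def)

lemma R_hom_rep_hom: "R_hom s t P I X Y g \<Longrightarrow> rep_hom s t (fst X) (fst Y) g"
  by (cases X; cases Y) (simp add: R_hom_def)

lemma R_iso_if_left_right_inv:
  assumes g: "R_hom s t P I (V,f,h) (W,f',h') g" and "hom_left_inv V W g" "hom_right_inv V W g"
  shows "R_iso s t P I (V,f,h) (W,f',h') g"
proof -
  from g have V: "is_rep s t V" and W: "is_rep s t W" and rg: "rep_hom s t V W g"
    and f: "rep_hom s t P V f" and h': "rep_hom s t W I h'"
    and gf: "comp_hom g f = f'" and hg: "comp_hom h' g = h"
    by (simp_all add: R_hom_iff R_obj_iff)
  obtain H where H: "\<And>i. H i \<in> carrier_mat (dimv V i) (dimv W i)"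
    and Hg: "\<And>i. H i * g i = 1\<^sub>m (dimv V i)" and gH: "\<And>i. g i * H i = 1\<^sub>m (dimv W i)"
    using hom_two_sided_inverse[OF rep_hom_carrier[OF rg] assms(2,3)] by blast
  have "comp_hom H f' = f"
  proof
    fix i
    have "H i * (g i * f i) = (H i * g i) * f i"
      using H[of i] rep_hom_carrier[OF rg, of i] rep_hom_carrier[OF f, of i] by simp
    then show "comp_hom H f' i = f i"
      using gf Hg[of i] rep_hom_carrier[OF f, of i] by (auto simp: comp_hom_def)
  qed
  moreover have "comp_hom h H = h'"
  proof
    fix i
    have "(h' i * g i) * H i = h' i * (g i * H i)"
      using H[of i] rep_hom_carrier[OF rg, of i] rep_hom_carrier[OF h', of i] by simp
    then show "comp_hom h H i = h' i"
      using hg gH[of i] rep_hom_carrier[OF h', of i] by (auto simp: comp_hom_def)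
  qed
  moreover have "comp_hom H g = R_id (V,f,h)" "comp_hom g H = R_id (W,f',h')"
    using Hg gH by (simp_all add: comp_hom_def R_id_def)
  ultimately show ?thesis
    using g rep_hom_inverse[OF V W rg H Hg gH] unfolding R_iso_def by (auto simp: R_hom_iff)
qed

lemma R_iso_hom_left_right_inv:
  assumes "R_iso s t P I X Y g"
  shows "hom_left_inv (fst X) (fst Y) g" "hom_right_inv (fst X) (fst Y) g"
proof -
  obtain g' where g': "R_hom s t P I Y X g'" and "comp_hom g' g = R_id X" "comp_hom g g' = R_id Y"
    using assms unfolding R_iso_def by blast
  then have "g' i * g i = 1\<^sub>m (dimv (fst X) i)" "g i * g' i = 1\<^sub>m (dimv (fst Y) i)" for i
    by (simp_all add: comp_hom_def R_id_def fun_eq_iff)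
  moreover note g'c = rep_hom_carrier[OF R_hom_rep_hom[OF g']]
  ultimately show "hom_left_inv (fst X) (fst Y) g" "hom_right_inv (fst X) (fst Y) g"
    unfolding hom_left_inv_def hom_right_inv_def by (metis g'c)+
qed

lemma R_mono_if_left_inv:
  assumes g: "R_hom s t P I Y X g" and inv: "hom_left_inv (fst Y) (fst X) g"
  shows "R_mono s t P I Y X g"
  unfolding R_mono_def
proof (intro conjI allI impI)
  fix Z u v assume a: "R_hom s t P I Z Y u \<and> R_hom s t P I Z Y v \<and> comp_hom g u = comp_hom g v"
  show "u = v"
  proof
    fix i
    obtain L where L: "L \<in> carrier_mat (dimv (fst Y) i) (dimv (fst X) i)" and Lg: "L * g i = 1\<^sub>m (dimv (fst Y) i)"
      using inv unfolding hom_left_inv_def by blast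
    have gc: "g i \<in> carrier_mat (dimv (fst X) i) (dimv (fst Y) i)"
      using rep_hom_carrier[OF R_hom_rep_hom[OF g]] .
    have uc: "u i \<in> carrier_mat (dimv (fst Y) i) (dimv (fst Z) i)"
      and vc: "v i \<in> carrier_mat (dimv (fst Y) i) (dimv (fst Z) i)"
      using a by (blast intro: rep_hom_carrier R_hom_rep_hom)+
    have "g i * u i = g i * v i" using a by (metis comp_hom_def)
    then have "(L * g i) * u i = (L * g i) * v i"
      by (simp add: assoc_mult_mat[OF L gc uc] assoc_mult_mat[OF L gc vc])
    then show "u i = v i" using Lg uc vc by simp
  qed
qed (rule g)

lemma R_epi_if_right_inv:
  assumes g: "R_hom s t P I X Y g" and inv: "hom_right_inv (fst X) (fst Y) g"
  shows "R_epi s t P I X Y g"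
  unfolding R_epi_def
proof (intro conjI allI impI)
  fix Z u v assume a: "R_hom s t P I Y Z u \<and> R_hom s t P I Y Z v \<and> comp_hom u g = comp_hom v g"
  show "u = v"
  proof
    fix i
    obtain R where R: "R \<in> carrier_mat (dimv (fst X) i) (dimv (fst Y) i)" and gR: "g i * R = 1\<^sub>m (dimv (fst Y) i)"
      using inv unfolding hom_right_inv_def by blast
    have gc: "g i \<in> carrier_mat (dimv (fst Y) i) (dimv (fst X) i)"
      using rep_hom_carrier[OF R_hom_rep_hom[OF g]] .
    have uc: "u i \<in> carrier_mat (dimv (fst Z) i) (dimv (fst Y) i)"
      and vc: "v i \<in> carrier_mat (dimv (fst Z) i) (dimv (fst Y) i)"
      using a by (blast intro: rep_hom_carrier R_hom_rep_hom)+
    have "u i * g i = v i * g i" using a by (metis comp_hom_def)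
    then have "u i * (g i * R) = v i * (g i * R)"
      by (simp flip: assoc_mult_mat[OF uc gc R] assoc_mult_mat[OF vc gc R])
    then show "u i = v i" using gR uc vc by simp
  qed
qed (rule g)

definition dsum_trivial :: "('v,'a) qrep \<Rightarrow> ('v,'a) robj \<Rightarrow> ('v,'a) robj" where
  "dsum_trivial K X = (case X of (V, f, h) \<Rightarrow>
     (dsum_rep V K, \<lambda>i. f i @\<^sub>r 0\<^sub>m (dimv K i) (dimv P i), \<lambda>i. append_cols (h i) (0\<^sub>m (dimv I i) (dimv K i))))"

lemma R_obj_dsum_trivial:
  assumes X: "R_obj s t P I (V,f,h)" and P: "is_rep s t P" and I: "is_rep s t I" and K: "is_rep s t K"
  shows "R_obj s t P I (dsum_trivial K (V,f,h))"
proof -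
  from X have V: "is_rep s t V" and f: "rep_hom s t P V f" and h: "rep_hom s t V I h"
    by (simp_all add: R_obj_iff)
  show ?thesis
    using is_rep_dsum_rep[OF V K] rep_hom_append_rows[OF V K P f rep_hom_zero[OF P K]]
      rep_hom_append_cols[OF V K I h rep_hom_zero[OF K I]]
    by (simp add: dsum_trivial_def R_obj_iff)
qed

lemma R_hom_from_dsum_trivial:
  assumes X: "R_obj s t P I (V,f,h)" and P: "is_rep s t P" and I: "is_rep s t I" and K: "is_rep s t K"
    and E: "rep_hom s t K V E" and hE: "\<And>i. h i * E i = 0\<^sub>m (dimv I i) (dimv K i)"
  shows "R_hom s t P I (dsum_trivial K (V,f,h)) (V,f,h) (\<lambda>i. append_cols (1\<^sub>m (dimv V i)) (E i))"
proof -
  from X have V: "is_rep s t V" and f: "rep_hom s t P V f" and h: "rep_hom s t V I h"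
    by (simp_all add: R_obj_iff)
  have "append_cols (1\<^sub>m (dimv V i)) (E i) * (f i @\<^sub>r 0\<^sub>m (dimv K i) (dimv P i)) = f i" for i
    using append_cols_mult_append_rows[OF one_carrier_mat rep_hom_carrier[OF E] rep_hom_carrier[OF f]
        zero_carrier_mat] rep_hom_carrier[OF f, of i] rep_hom_carrier[OF E, of i]
    by simp
  moreover have "h i * append_cols (1\<^sub>m (dimv V i)) (E i) = append_cols (h i) (0\<^sub>m (dimv I i) (dimv K i))" for i
    using mult_append_cols[OF rep_hom_carrier[OF h] one_carrier_mat rep_hom_carrier[OF E]]
      rep_hom_carrier[OF h, of i] hE[of i] by simp
  ultimately show ?thesis
    using R_obj_dsum_trivial[OF X P I K] X rep_hom_append_cols[OF V K V rep_hom_id[OF V] E]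
    by (simp add: R_hom_iff dsum_trivial_def comp_hom_def)
qed

lemma R_hom_into_dsum_trivial:
  assumes X: "R_obj s t P I (V,f,h)" and P: "is_rep s t P" and I: "is_rep s t I" and K: "is_rep s t K"
    and E: "rep_hom s t V K E" and Ef: "\<And>i. E i * f i = 0\<^sub>m (dimv K i) (dimv P i)"
  shows "R_hom s t P I (V,f,h) (dsum_trivial K (V,f,h)) (\<lambda>i. 1\<^sub>m (dimv V i) @\<^sub>r E i)"
proof -
  from X have V: "is_rep s t V" and f: "rep_hom s t P V f" and h: "rep_hom s t V I h"
    by (simp_all add: R_obj_iff)
  have "(1\<^sub>m (dimv V i) @\<^sub>r E i) * f i = f i @\<^sub>r 0\<^sub>m (dimv K i) (dimv P i)" for i
    using append_rows_mult[OF one_carrier_mat rep_hom_carrier[OF E] rep_hom_carrier[OF f]]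
      rep_hom_carrier[OF f, of i] Ef[of i] by simp
  moreover have "append_cols (h i) (0\<^sub>m (dimv I i) (dimv K i)) * (1\<^sub>m (dimv V i) @\<^sub>r E i) = h i" for i
    using append_cols_mult_append_rows[OF rep_hom_carrier[OF h] zero_carrier_mat one_carrier_mat
        rep_hom_carrier[OF E]] rep_hom_carrier[OF h, of i] rep_hom_carrier[OF E, of i]
    by simp
  ultimately show ?thesis
    using R_obj_dsum_trivial[OF X P I K] X rep_hom_append_rows[OF V K V rep_hom_id[OF V] E]
    by (simp add: R_hom_iff dsum_trivial_def comp_hom_def)
qed

lemma R_mono_kills_kernel_maps:
  assumes mono: "R_mono s t P I (W,f',h') (V,f,h) g" and P: "is_rep s t P" and I: "is_rep s t I"
    and K: "is_rep s t K" and E: "rep_hom s t K W E" and gE: "\<And>i. g i * E i = 0\<^sub>m (dimv V i) (dimv K i)"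
  shows "E i = 0\<^sub>m (dimv W i) (dimv K i)"
proof -
  have g: "R_hom s t P I (W,f',h') (V,f,h) g" using mono by (simp add: R_mono_def)
  then have Y: "R_obj s t P I (W,f',h')" and W: "is_rep s t W" and rg: "rep_hom s t W V g"
    and h: "rep_hom s t V I h" and h': "rep_hom s t W I h'" and hg: "comp_hom h g = h'"
    by (simp_all add: R_hom_iff R_obj_iff)
  have h'E: "h' j * E j = 0\<^sub>m (dimv I j) (dimv K j)" for j
  proof -
    have "h' j * E j = h j * (g j * E j)"
      using hg rep_hom_carrier[OF h, of j] rep_hom_carrier[OF rg, of j] rep_hom_carrier[OF E, of j]
      by (auto simp: comp_hom_def)
    then show ?thesis using gE[of j] rep_hom_carrier[OF h, of j] by simp
  qed
  let ?u = "\<lambda>j. append_cols (1\<^sub>m (dimv W j)) (E j)"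
  let ?v = "\<lambda>j. append_cols (1\<^sub>m (dimv W j)) (0\<^sub>m (dimv W j) (dimv K j))"
  have u: "R_hom s t P I (dsum_trivial K (W,f',h')) (W,f',h') ?u"
    by (rule R_hom_from_dsum_trivial[OF Y P I K E h'E])
  have v: "R_hom s t P I (dsum_trivial K (W,f',h')) (W,f',h') ?v"
    by (rule R_hom_from_dsum_trivial[OF Y P I K rep_hom_zero[OF K W]])
      (simp add: right_mult_zero_mat[OF rep_hom_carrier[OF h']])
  have "comp_hom g ?u = comp_hom g ?v"
  proof
    fix j
    note c = rep_hom_carrier[OF rg, of j] rep_hom_carrier[OF E, of j]
    show "comp_hom g ?u j = comp_hom g ?v j"
      using mult_append_cols[OF c(1) one_carrier_mat c(2)] mult_append_cols[OF c(1) one_carrier_mat zero_carrier_mat]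
        gE[of j] c by (simp add: comp_hom_def)
  qed
  then have "?u = ?v" using mono u v unfolding R_mono_def by blast
  then show ?thesis
    using append_cols_right_cancel[OF one_carrier_mat rep_hom_carrier[OF E] one_carrier_mat zero_carrier_mat]
    by metis
qed

lemma R_epi_kills_cokernel_maps:
  assumes epi: "R_epi s t P I (V,f,h) (W,f'',h'') g" and P: "is_rep s t P" and I: "is_rep s t I"
    and K: "is_rep s t K" and E: "rep_hom s t W K E" and Eg: "\<And>i. E i * g i = 0\<^sub>m (dimv K i) (dimv V i)"
  shows "E i = 0\<^sub>m (dimv K i) (dimv W i)"
proof -
  have g: "R_hom s t P I (V,f,h) (W,f'',h'') g" using epi by (simp add: R_epi_def)
  then have Y: "R_obj s t P I (W,f'',h'')" and W: "is_rep s t W" and rg: "rep_hom s t V W g"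
    and f: "rep_hom s t P V f" and f'': "rep_hom s t P W f''" and gf: "comp_hom g f = f''"
    by (simp_all add: R_hom_iff R_obj_iff)
  have Ef'': "E j * f'' j = 0\<^sub>m (dimv K j) (dimv P j)" for j
  proof -
    have "E j * f'' j = (E j * g j) * f j"
      using gf rep_hom_carrier[OF f, of j] rep_hom_carrier[OF rg, of j] rep_hom_carrier[OF E, of j]
      by (auto simp: comp_hom_def)
    then show ?thesis using Eg[of j] rep_hom_carrier[OF f, of j] by simp
  qed
  let ?u = "\<lambda>j. 1\<^sub>m (dimv W j) @\<^sub>r E j"
  let ?v = "\<lambda>j. 1\<^sub>m (dimv W j) @\<^sub>r 0\<^sub>m (dimv K j) (dimv W j)"
  have u: "R_hom s t P I (W,f'',h'') (dsum_trivial K (W,f'',h'')) ?u"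
    by (rule R_hom_into_dsum_trivial[OF Y P I K E Ef''])
  have v: "R_hom s t P I (W,f'',h'') (dsum_trivial K (W,f'',h'')) ?v"
    by (rule R_hom_into_dsum_trivial[OF Y P I K rep_hom_zero[OF W K]])
      (simp add: left_mult_zero_mat[OF rep_hom_carrier[OF f'']])
  have "comp_hom ?u g = comp_hom ?v g"
  proof
    fix j
    note c = rep_hom_carrier[OF rg, of j] rep_hom_carrier[OF E, of j]
    show "comp_hom ?u g j = comp_hom ?v g j"
      using append_rows_mult[OF one_carrier_mat c(2) c(1)] append_rows_mult[OF one_carrier_mat zero_carrier_mat c(1)]
        Eg[of j] c by (simp add: comp_hom_def)
  qed
  then have "?u = ?v" using epi u v unfolding R_epi_def by blast
  then show ?thesis
    using append_rows_lower_cancel[OF one_carrier_mat rep_hom_carrier[OF E] one_carrier_mat zero_carrier_mat]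
    by metis
qed

lemma hom_left_inv_if_R_mono:
  assumes mono: "R_mono s t P I (W,f',h') (V,f,h) g" and P: "is_rep s t P" and I: "is_rep s t I"
  shows "hom_left_inv W V g"
proof -
  from mono have W: "is_rep s t W" and V: "is_rep s t V" and rg: "rep_hom s t W V g"
    by (simp_all add: R_mono_def R_hom_iff R_obj_iff)
  obtain k K L Y where K: "\<And>i. K i \<in> carrier_mat (dimv W i) (k i)" and L: "\<And>i. L i \<in> carrier_mat (k i) (dimv W i)"
    and Y: "\<And>i. Y i \<in> carrier_mat (dimv W i) (dimv V i)" and gK: "\<And>i. g i * K i = 0\<^sub>m (dimv V i) (k i)"
    and LK: "\<And>i. L i * K i = 1\<^sub>m (k i)" and split: "\<And>i. K i * L i + Y i * g i = 1\<^sub>m (dimv W i)"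
    by (rule mat_kernel_complement_family[of g "dimv V" "dimv W", OF rep_hom_carrier[OF rg]]) blast
  let ?Ker = "induced_rep s t W k L K"
  have Ker: "is_rep s t ?Ker" by (rule is_rep_induced_rep[OF W L K])
  have "rep_hom s t ?Ker W K"
    by (rule rep_hom_induced_embedding[OF W L K LK _ rep_hom_kernel_invariant[OF W V rg K L Y gK split]])
      (rule mult_carrier_mat[OF mult_carrier_mat[OF L is_rep_carrier[OF W]] K])
  moreover have "g i * K i = 0\<^sub>m (dimv V i) (dimv ?Ker i)" for i
    using gK by (simp add: induced_rep_def)
  ultimately have "K i = 0\<^sub>m (dimv W i) (k i)" for i
    using R_mono_kills_kernel_maps[OF mono P I Ker] by (simp add: induced_rep_def)
  then have "Y i * g i = 1\<^sub>m (dimv W i)" for i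
    using split[of i] L[of i] Y[of i] rep_hom_carrier[OF rg, of i] by simp
  then show ?thesis unfolding hom_left_inv_def using Y by blast
qed

lemma hom_right_inv_if_R_epi:
  assumes epi: "R_epi s t P I (V,f,h) (W,f'',h'') g" and P: "is_rep s t P" and I: "is_rep s t I"
  shows "hom_right_inv V W g"
proof -
  from epi have V: "is_rep s t V" and W: "is_rep s t W" and rg: "rep_hom s t V W g"
    by (simp_all add: R_epi_def R_hom_iff R_obj_iff)
  obtain q Q S X where Q: "\<And>i. Q i \<in> carrier_mat (q i) (dimv W i)" and S: "\<And>i. S i \<in> carrier_mat (dimv W i) (q i)"
    and X: "\<And>i. X i \<in> carrier_mat (dimv V i) (dimv W i)" and Qg: "\<And>i. Q i * g i = 0\<^sub>m (q i) (dimv V i)"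
    and QS: "\<And>i. Q i * S i = 1\<^sub>m (q i)" and split: "\<And>i. g i * X i + S i * Q i = 1\<^sub>m (dimv W i)"
    by (rule mat_cokernel_complement_family[of g "dimv W" "dimv V", OF rep_hom_carrier[OF rg]]) blast
  let ?Coker = "induced_rep s t W q Q S"
  have Coker: "is_rep s t ?Coker" by (rule is_rep_induced_rep[OF W Q S])
  have "rep_hom s t W ?Coker Q"
    by (rule rep_hom_induced_projection[OF W Q S QS _ rep_hom_cokernel_invariant[OF V W rg Q S X Qg split]])
      (rule mult_carrier_mat[OF mult_carrier_mat[OF Q is_rep_carrier[OF W]] S])
  moreover have "Q i * g i = 0\<^sub>m (dimv ?Coker i) (dimv V i)" for i
    using Qg by (simp add: induced_rep_def)
  ultimately have "Q i = 0\<^sub>m (q i) (dimv W i)" for i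
    using R_epi_kills_cokernel_maps[OF epi P I Coker] by (simp add: induced_rep_def)
  then have "g i * X i = 1\<^sub>m (dimv W i)" for i
    using split[of i] S[of i] X[of i] rep_hom_carrier[OF rg, of i] by simp
  then show ?thesis unfolding hom_right_inv_def using X by blast
qed

lemma non_iso_mono_if_not_hom_right_inv:
  assumes X: "R_obj s t P I (V,f,h)" and P: "is_rep s t P" and I: "is_rep s t I"
    and not_inv: "\<not> hom_right_inv P V f"
  shows "\<exists>Y g. R_mono s t P I Y (V,f,h) g \<and> \<not> R_iso s t P I Y (V,f,h) g"
proof -
  from X have V: "is_rep s t V" and f: "rep_hom s t P V f" and h: "rep_hom s t V I h"
    by (simp_all add: R_obj_iff)
  obtain r B C L R where B: "\<And>i. B i \<in> carrier_mat (dimv V i) (r i)" and C: "\<And>i. C i \<in> carrier_mat (r i) (dimv P i)"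
    and L: "\<And>i. L i \<in> carrier_mat (r i) (dimv V i)" and R: "\<And>i. R i \<in> carrier_mat (dimv P i) (r i)"
    and fBC: "\<And>i. f i = B i * C i" and LB: "\<And>i. L i * B i = 1\<^sub>m (r i)" and CR: "\<And>i. C i * R i = 1\<^sub>m (r i)"
    by (rule rank_factorization_family[of f "dimv V" "dimv P", OF rep_hom_carrier[OF f]]) blast
  have BC: "comp_hom B C = f" using fBC by (simp add: comp_hom_def fun_eq_iff)
  let ?Im = "induced_rep s t V r L B"
  have Im: "is_rep s t ?Im" by (rule is_rep_induced_rep[OF V L B])
  have dim: "dimv ?Im i = r i" for i by (simp add: induced_rep_def)
  have rB: "rep_hom s t ?Im V B"
    by (rule rep_hom_induced_embedding[OF V L B LB _ rep_hom_image_invariant[OF P V f B C R fBC CR]])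
      (rule mult_carrier_mat[OF mult_carrier_mat[OF C is_rep_carrier[OF P]] R])
  have rC: "rep_hom s t P ?Im C"
    by (rule rep_hom_cancel_left[OF P Im V rB, of L]) (use L LB C f[folded BC] in \<open>simp_all add: dim\<close>)
  have Y: "R_obj s t P I (?Im, C, comp_hom h B)"
    using Im rC rep_hom_comp[OF Im V I h rB] by (simp add: R_obj_iff)
  have RB: "R_hom s t P I (?Im, C, comp_hom h B) (V,f,h) B"
    using Y X rB BC by (simp add: R_hom_iff)
  have "R_mono s t P I (?Im, C, comp_hom h B) (V,f,h) B"
    by (rule R_mono_if_left_inv[OF RB]) (use L LB in \<open>auto simp: hom_left_inv_def dim\<close>)
  moreover have "\<not> R_iso s t P I (?Im, C, comp_hom h B) (V,f,h) B"
  proof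
    assume "R_iso s t P I (?Im, C, comp_hom h B) (V,f,h) B"
    from R_iso_hom_left_right_inv(2)[OF this] have "hom_right_inv ?Im V B" by simp
    moreover have "hom_right_inv P ?Im C" using R CR by (auto simp: hom_right_inv_def dim)
    ultimately have "hom_right_inv P V f"
      using hom_right_inv_comp[OF rep_hom_carrier[OF rB] rep_hom_carrier[OF rC]] BC by simp
    then show False using not_inv by simp
  qed
  ultimately show ?thesis by blast
qed

lemma non_iso_epi_if_not_hom_left_inv:
  assumes X: "R_obj s t P I (V,f,h)" and P: "is_rep s t P" and I: "is_rep s t I"
    and not_inv: "\<not> hom_left_inv V I h"
  shows "\<exists>Y g. R_epi s t P I (V,f,h) Y g \<and> \<not> R_iso s t P I (V,f,h) Y g"
proof -
  from X have V: "is_rep s t V" and f: "rep_hom s t P V f" and h: "rep_hom s t V I h"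
    by (simp_all add: R_obj_iff)
  obtain r B C L R where B: "\<And>i. B i \<in> carrier_mat (dimv I i) (r i)" and C: "\<And>i. C i \<in> carrier_mat (r i) (dimv V i)"
    and L: "\<And>i. L i \<in> carrier_mat (r i) (dimv I i)" and R: "\<And>i. R i \<in> carrier_mat (dimv V i) (r i)"
    and hBC: "\<And>i. h i = B i * C i" and LB: "\<And>i. L i * B i = 1\<^sub>m (r i)" and CR: "\<And>i. C i * R i = 1\<^sub>m (r i)"
    by (rule rank_factorization_family[of h "dimv I" "dimv V", OF rep_hom_carrier[OF h]]) blast
  have BC: "comp_hom B C = h" using hBC by (simp add: comp_hom_def fun_eq_iff)
  let ?Im = "induced_rep s t V r C R"
  have Im: "is_rep s t ?Im" by (rule is_rep_induced_rep[OF V C R])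
  have dim: "dimv ?Im i = r i" for i by (simp add: induced_rep_def)
  have rC: "rep_hom s t V ?Im C"
    by (rule rep_hom_induced_projection[OF V C R CR _ rep_hom_coimage_invariant[OF V I h B C L hBC LB]])
      (rule mult_carrier_mat[OF mult_carrier_mat[OF L is_rep_carrier[OF I]] B])
  have rB: "rep_hom s t ?Im I B"
    by (rule rep_hom_cancel_right[OF V Im I rC, of R]) (use R CR B h[folded BC] in \<open>simp_all add: dim\<close>)
  have Y: "R_obj s t P I (?Im, comp_hom C f, B)"
    using Im rB rep_hom_comp[OF P V Im rC f] by (simp add: R_obj_iff)
  have RC: "R_hom s t P I (V,f,h) (?Im, comp_hom C f, B) C"
    using Y X rC BC by (simp add: R_hom_iff)
  have "R_epi s t P I (V,f,h) (?Im, comp_hom C f, B) C"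
    by (rule R_epi_if_right_inv[OF RC]) (use R CR in \<open>auto simp: hom_right_inv_def dim\<close>)
  moreover have "\<not> R_iso s t P I (V,f,h) (?Im, comp_hom C f, B) C"
  proof
    assume "R_iso s t P I (V,f,h) (?Im, comp_hom C f, B) C"
    from R_iso_hom_left_right_inv(1)[OF this] have "hom_left_inv V ?Im C" by simp
    moreover have "hom_left_inv ?Im I B" using L LB by (auto simp: hom_left_inv_def dim)
    ultimately have "hom_left_inv V I h"
      using hom_left_inv_comp[OF rep_hom_carrier[OF rB] rep_hom_carrier[OF rC]] BC by simp
    then show False using not_inv by simp
  qed
  ultimately show ?thesis by blast
qed

lemma R_mono_is_iso_if_hom_right_inv:
  assumes mono: "R_mono s t P I Y (V,f,h) g" and P: "is_rep s t P" and I: "is_rep s t I"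
    and inv: "hom_right_inv P V f"
  shows "R_iso s t P I Y (V,f,h) g"
proof -
  obtain W f' h' where Y: "Y = (W,f',h')" by (cases Y)
  have g: "R_hom s t P I (W,f',h') (V,f,h) g" using mono Y by (simp add: R_mono_def)
  then have rg: "rep_hom s t W V g" and f': "rep_hom s t P W f'" and gf': "comp_hom g f' = f"
    by (simp_all add: R_hom_iff R_obj_iff)
  have "hom_right_inv W V g"
    by (rule hom_right_inv_cancel_right[OF rep_hom_carrier[OF rg] rep_hom_carrier[OF f']]) (simp add: gf' inv)
  then show ?thesis
    unfolding Y using R_iso_if_left_right_inv[OF g] hom_left_inv_if_R_mono[OF mono[unfolded Y] P I] by blast
qed

lemma R_epi_is_iso_if_hom_left_inv:
  assumes epi: "R_epi s t P I (V,f,h) Y g" and P: "is_rep s t P" and I: "is_rep s t I"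
    and inv: "hom_left_inv V I h"
  shows "R_iso s t P I (V,f,h) Y g"
proof -
  obtain W f'' h'' where Y: "Y = (W,f'',h'')" by (cases Y)
  have g: "R_hom s t P I (V,f,h) (W,f'',h'') g" using epi Y by (simp add: R_epi_def)
  then have rg: "rep_hom s t V W g" and h'': "rep_hom s t W I h''" and hg: "comp_hom h'' g = h"
    by (simp_all add: R_hom_iff R_obj_iff)
  have "hom_left_inv V W g"
    by (rule hom_left_inv_cancel_left[OF rep_hom_carrier[OF rg] rep_hom_carrier[OF h'']]) (simp add: hg inv)
  then show ?thesis
    unfolding Y using R_iso_if_left_right_inv[OF g] hom_right_inv_if_R_epi[OF epi[unfolded Y] P I] by blast
qed

lemma R_simple_iff_hom_right_inv_left_inv:
  assumes X: "R_obj s t P I (V,f,h)" and P: "is_rep s t P" and I: "is_rep s t I"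
  shows "R_simple s t P I (V,f,h) \<longleftrightarrow> hom_right_inv P V f \<and> hom_left_inv V I h"
  unfolding R_simple_def
  using non_iso_mono_if_not_hom_right_inv[OF X P I] non_iso_epi_if_not_hom_left_inv[OF X P I]
    R_mono_is_iso_if_hom_right_inv[OF _ P I] R_epi_is_iso_if_hom_left_inv[OF _ P I]
  by blast

end

theorem mainTheorem13:
  fixes s t :: "'a::finite \<Rightarrow> 'v::finite"
    and P I V :: "('v,'a) qrep" and f h :: "'v \<Rightarrow> complex mat"
  assumes "acyclic_quiver s t"
    and "projective_rep s t P"
    and "injective_rep s t I"
    and "R_obj s t P I (V, f, h)"
  shows "R_simple s t P I (V, f, h) \<longleftrightarrow> hom_surj P V f \<and> hom_inj V I h"
proof -
  have P: "is_rep s t P" using assms(2) by (simp add: projective_rep_def)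
  have I: "is_rep s t I" using assms(3) by (simp add: injective_rep_def)
  from assms(4) have f: "rep_hom s t P V f" and h: "rep_hom s t V I h"
    by (simp_all add: R_obj_iff)
  show ?thesis
    using R_simple_iff_hom_right_inv_left_inv[OF assms(4) P I]
      hom_surj_iff_right_inv[OF rep_hom_carrier[OF f]] hom_inj_iff_left_inv[OF rep_hom_carrier[OF h]]
    by simp
qed

end
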